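(* Let $(V_1, V_2)$ be an irreducible isometric pair on a Hilbert space $\mathcal{H}$. Then $(V_1, V_2)$ is a $1$-finite pair if and only if $(V_1, V_2)$ is unitarily equivalent to $(M_z, M_w)$ on $H^2(\mathbb{D}^2)$.
   Context: All Hilbert spaces are complex and separable. An isometric pair is a pair $(V_1,V_2)$ of commuting isometries. An isometry $V$ is a shift if $V^{*m}\to0$ strongly. A BCL pair is an isometric pair with $V_1V_2$ a shift. $[V_2^*,V_1] := V_2^*V_1 - V_1V_2^*$. A compact normal pair is a BCL pair with $[V_2^*,V_1]$ compact and normal. $C(V_1,V_2) := I - V_1V_1^* - V_2V_2^* + V_1V_2V_1^*V_2^*$. A $1$-finite pair is a compact normal pair with $\operatorname{rank} C(V_1,V_2)=1$. Irreducible: no closed subspace other than $\{0\}$ and $\mathcal{H}$ invariant under $V_1,V_2,V_1^*,V_2^*$. $H^2(\mathbb{D}^2)$ is the Hardy space of the bidisc and $M_z,M_w$ are multiplication by the coordinate functions. Unitary equivalence of pairs means a single unitary intertwining both components. *)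

theory Defs
  imports "HOL-Analysis.Analysis"
begin

class complex_inner = real_normed_vector +
  fixes scaleC :: "complex \<Rightarrow> 'a \<Rightarrow> 'a" (infixr \<open>*\<^sub>C\<close> 75)
    and cinner :: "'a \<Rightarrow> 'a \<Rightarrow> complex"
  assumes scaleC_add_right: "a *\<^sub>C (x + y) = a *\<^sub>C x + a *\<^sub>C y"
    and scaleC_add_left: "(a + b) *\<^sub>C x = a *\<^sub>C x + b *\<^sub>C x"
    and scaleC_scaleC: "a *\<^sub>C (b *\<^sub>C x) = (a * b) *\<^sub>C x"
    and scaleC_one: "1 *\<^sub>C x = x"
    and scaleR_scaleC: "r *\<^sub>R x = (complex_of_real r) *\<^sub>C x"
    and cinner_add_left: "cinner (x + y) z = cinner x z + cinner y z"
    and cinner_scaleC_left: "cinner (a *\<^sub>C x) y = a * cinner x y"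
    and cinner_commute: "cinner y x = cnj (cinner x y)"
    and cinner_self_nonneg: "0 \<le> Re (cinner x x)"
    and cinner_self_eq_zero: "cinner x x = 0 \<longleftrightarrow> x = 0"
    and norm_eq_sqrt_cinner: "norm x = sqrt (Re (cinner x x))"

class chilbert = complex_inner + complete_space

instantiation complex :: chilbert
begin
definition scaleC_complex :: "complex \<Rightarrow> complex \<Rightarrow> complex" where "scaleC_complex a x = a * x"
definition cinner_complex :: "complex \<Rightarrow> complex \<Rightarrow> complex" where "cinner_complex x y = x * cnj y"
instance
proof
  fix x :: complex
  show "cinner x x = 0 \<longleftrightarrow> x = 0"
    by (simp add: cinner_complex_def)
qed (auto simp: scaleC_complex_def cinner_complex_def algebra_simps scaleR_conv_of_real
                    complex_norm_square[symmetric] cmod_def)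
end

definition separable_space :: "'a::topological_space itself \<Rightarrow> bool" where
  "separable_space _ \<longleftrightarrow> (\<exists>D::'a set. countable D \<and> closure D = UNIV)"

definition clinear :: "('a::chilbert \<Rightarrow> 'b::chilbert) \<Rightarrow> bool" where
  "clinear T \<longleftrightarrow> (\<forall>x y. T (x + y) = T x + T y) \<and> (\<forall>a x. T (a *\<^sub>C x) = a *\<^sub>C T x)"

definition cbounded_linear :: "('a::chilbert \<Rightarrow> 'b::chilbert) \<Rightarrow> bool" where
  "cbounded_linear T \<longleftrightarrow> clinear T \<and> (\<exists>K. \<forall>x. norm (T x) \<le> norm x * K)"

text \<open>The Hilbert space adjoint (unique for bounded operators, by Riesz).\<close>
definition adj :: "('a::chilbert \<Rightarrow> 'a) \<Rightarrow> ('a \<Rightarrow> 'a)" where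
  "adj T = (THE S. \<forall>x y. cinner (T x) y = cinner x (S y))"

definition isometry :: "('a::chilbert \<Rightarrow> 'a) \<Rightarrow> bool" where
  "isometry V \<longleftrightarrow> cbounded_linear V \<and> (\<forall>x. norm (V x) = norm x)"

definition is_shift :: "('a::chilbert \<Rightarrow> 'a) \<Rightarrow> bool" where
  "is_shift V \<longleftrightarrow> isometry V \<and> (\<forall>x. (\<lambda>m. (adj V ^^ m) x) \<longlonglongrightarrow> 0)"

definition compact_op :: "('a::chilbert \<Rightarrow> 'a) \<Rightarrow> bool" where
  "compact_op T \<longleftrightarrow> cbounded_linear T \<and> compact (closure (T ` {x. norm x \<le> 1}))"

definition normal_op :: "('a::chilbert \<Rightarrow> 'a) \<Rightarrow> bool" where
  "normal_op T \<longleftrightarrow> T \<circ> adj T = adj T \<circ> T"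

text \<open>Rank = complex dimension of the range (0 if infinite-dimensional, as for
  \<open>Vector_Spaces.dim\<close>; only rank 1 is used).\<close>
definition crank :: "('a::chilbert \<Rightarrow> 'a) \<Rightarrow> nat" where
  "crank T = vector_space.dim (scaleC :: complex \<Rightarrow> 'a \<Rightarrow> 'a) (range T)"

definition isometric_pair :: "('a::chilbert \<Rightarrow> 'a) \<Rightarrow> ('a \<Rightarrow> 'a) \<Rightarrow> bool" where
  "isometric_pair V1 V2 \<longleftrightarrow> isometry V1 \<and> isometry V2 \<and> V1 \<circ> V2 = V2 \<circ> V1"

definition BCL_pair :: "('a::chilbert \<Rightarrow> 'a) \<Rightarrow> ('a \<Rightarrow> 'a) \<Rightarrow> bool" where
  "BCL_pair V1 V2 \<longleftrightarrow> isometric_pair V1 V2 \<and> is_shift (V1 \<circ> V2)"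

definition cross_comm :: "('a::chilbert \<Rightarrow> 'a) \<Rightarrow> ('a \<Rightarrow> 'a) \<Rightarrow> ('a \<Rightarrow> 'a)" where
  "cross_comm V1 V2 = (\<lambda>x. adj V2 (V1 x) - V1 (adj V2 x))"

definition compact_normal_pair :: "('a::chilbert \<Rightarrow> 'a) \<Rightarrow> ('a \<Rightarrow> 'a) \<Rightarrow> bool" where
  "compact_normal_pair V1 V2 \<longleftrightarrow> BCL_pair V1 V2 \<and>
     compact_op (cross_comm V1 V2) \<and> normal_op (cross_comm V1 V2)"

definition defect_op :: "('a::chilbert \<Rightarrow> 'a) \<Rightarrow> ('a \<Rightarrow> 'a) \<Rightarrow> ('a \<Rightarrow> 'a)" where
  "defect_op V1 V2 = (\<lambda>x. x - V1 (adj V1 x) - V2 (adj V2 x) + V1 (V2 (adj V1 (adj V2 x))))"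

definition one_finite_pair :: "('a::chilbert \<Rightarrow> 'a) \<Rightarrow> ('a \<Rightarrow> 'a) \<Rightarrow> bool" where
  "one_finite_pair V1 V2 \<longleftrightarrow> compact_normal_pair V1 V2 \<and> crank (defect_op V1 V2) = 1"

definition closed_csubspace :: "'a::chilbert set \<Rightarrow> bool" where
  "closed_csubspace M \<longleftrightarrow> closed M \<and> 0 \<in> M \<and> (\<forall>x\<in>M. \<forall>y\<in>M. x + y \<in> M) \<and>
     (\<forall>a. \<forall>x\<in>M. a *\<^sub>C x \<in> M)"

definition irreducible_pair :: "('a::chilbert \<Rightarrow> 'a) \<Rightarrow> ('a \<Rightarrow> 'a) \<Rightarrow> bool" where
  "irreducible_pair V1 V2 \<longleftrightarrow> (\<forall>M. closed_csubspace M \<and>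
      V1 ` M \<subseteq> M \<and> V2 ` M \<subseteq> M \<and> adj V1 ` M \<subseteq> M \<and> adj V2 ` M \<subseteq> M
      \<longrightarrow> M = {0} \<or> M = UNIV)"

definition bidisc :: "(complex \<times> complex) set" where
  "bidisc = {(z, w). norm z < 1 \<and> norm w < 1}"

definition sq_summable_coeffs :: "(nat \<times> nat \<Rightarrow> complex) \<Rightarrow> bool" where
  "sq_summable_coeffs c \<longleftrightarrow> (\<lambda>k. (norm (c k))\<^sup>2) summable_on UNIV"

definition H2_fun :: "(nat \<times> nat \<Rightarrow> complex) \<Rightarrow> (complex \<times> complex \<Rightarrow> complex)" where
  "H2_fun c = (\<lambda>(z, w). if (z, w) \<in> bidisc then (\<Sum>\<^sub>\<infinity>(m, n). c (m, n) * z ^ m * w ^ n) else 0)"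

definition H2 :: "(complex \<times> complex \<Rightarrow> complex) set" where
  "H2 = H2_fun ` {c. sq_summable_coeffs c}"

definition H2_coeff :: "(complex \<times> complex \<Rightarrow> complex) \<Rightarrow> (nat \<times> nat \<Rightarrow> complex)" where
  "H2_coeff f = (THE c. sq_summable_coeffs c \<and> H2_fun c = f)"

definition H2_norm :: "(complex \<times> complex \<Rightarrow> complex) \<Rightarrow> real" where
  "H2_norm f = sqrt (\<Sum>\<^sub>\<infinity>k. (norm (H2_coeff f k))\<^sup>2)"

definition Mz :: "(complex \<times> complex \<Rightarrow> complex) \<Rightarrow> (complex \<times> complex \<Rightarrow> complex)" where
  "Mz f = (\<lambda>(z, w). z * f (z, w))"

definition Mw :: "(complex \<times> complex \<Rightarrow> complex) \<Rightarrow> (complex \<times> complex \<Rightarrow> complex)" where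
  "Mw f = (\<lambda>(z, w). w * f (z, w))"

definition unitary_to_H2 :: "('a::chilbert \<Rightarrow> (complex \<times> complex \<Rightarrow> complex)) \<Rightarrow> bool" where
  "unitary_to_H2 U \<longleftrightarrow> bij_betw U UNIV H2 \<and>
     (\<forall>x y. U (x + y) = (\<lambda>p. U x p + U y p)) \<and>
     (\<forall>a x. U (a *\<^sub>C x) = (\<lambda>p. a * U x p)) \<and>
     (\<forall>x. H2_norm (U x) = norm x)"

definition unitarily_equiv_Mz_Mw :: "('a::chilbert \<Rightarrow> 'a) \<Rightarrow> ('a \<Rightarrow> 'a) \<Rightarrow> bool" where
  "unitarily_equiv_Mz_Mw V1 V2 \<longleftrightarrow> (\<exists>U. unitary_to_H2 U \<and>
     (\<forall>x. U (V1 x) = Mz (U x)) \<and> (\<forall>x. U (V2 x) = Mw (U x)))"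

end

theory Submission
  imports Defs "HOL-Complex_Analysis.Cauchy_Integral_Formula"
begin

(* If the cross-commutator is normal and the defect operator C(V1,V2) has rank one, then
   C = beta P_u for a unit vector u, and comparing the quadratic forms of C on the ranges of
   V1 and V2 shows that the cross-commutator vanishes: the pair is doubly commuting and u
   spans ker V1* \<inter> ker V2*. The vectors V1^m V2^n u are then orthonormal, and complete by
   irreducibility, so sending x to its coefficients against them is a unitary onto H^2(D^2)
   carrying (V1, V2) to (M_z, M_w). Conversely, for a pair equivalent to (M_z, M_w) the
   preimages of the monomials show that the pair is doubly commuting with wandering vector
   the preimage of 1, and the same computation exhibits it as a 1-finite pair. *)

section \<open>Complex inner product spaces\<close>

declare scaleC_one [simp]

lemma cinner_add_right: "cinner x (y + z) = cinner x y + cinner x z"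
  by (metis cinner_commute cinner_add_left complex_cnj_add)

lemma cinner_scaleC_right: "cinner x (a *\<^sub>C y) = cnj a * cinner x y"
  by (metis cinner_commute cinner_scaleC_left complex_cnj_mult)

lemma cinner_zero_left [simp]: "cinner 0 x = 0"
  using cinner_add_left[of 0 0 x] by simp

lemma cinner_zero_right [simp]: "cinner x 0 = 0"
  using cinner_add_right[of x 0 0] by simp

lemma scaleC_minus1_left: "(-1) *\<^sub>C x = - x"
  using scaleR_scaleC[of "-1" x] by simp

lemma cinner_minus_left: "cinner (- x) y = - cinner x y"
  using cinner_scaleC_left[of "-1" x y] by (simp add: scaleC_minus1_left)

lemma cinner_minus_right: "cinner x (- y) = - cinner x y"
  using cinner_scaleC_right[of x "-1" y] by (simp add: scaleC_minus1_left)

lemma cinner_diff_left: "cinner (x - y) z = cinner x z - cinner y z"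
  by (simp only: diff_conv_add_uminus cinner_add_left cinner_minus_left)

lemma cinner_diff_right: "cinner x (y - z) = cinner x y - cinner x z"
  by (simp only: diff_conv_add_uminus cinner_add_right cinner_minus_right)

lemma cinner_sum_left: "cinner (sum g F) y = (\<Sum>k\<in>F. cinner (g k) y)"
  by (induction F rule: infinite_finite_induct) (simp_all add: cinner_add_left)

lemma cinner_sum_right: "cinner y (sum g F) = (\<Sum>k\<in>F. cinner y (g k))"
  by (induction F rule: infinite_finite_induct) (simp_all add: cinner_add_right)

lemma scaleC_zero_right [simp]: "a *\<^sub>C 0 = 0"
  using scaleC_add_right[of a 0 0] by simp

lemma scaleC_zero_left [simp]: "0 *\<^sub>C x = 0"
  using scaleC_add_left[of 0 0 x] by simp

lemma scaleC_minus_right: "a *\<^sub>C (- x) = - (a *\<^sub>C x)"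
  by (metis scaleC_minus1_left scaleC_scaleC mult.commute)

lemma scaleC_diff_right: "a *\<^sub>C (x - y) = a *\<^sub>C x - a *\<^sub>C y"
  by (simp only: diff_conv_add_uminus scaleC_add_right scaleC_minus_right)

lemma scaleC_eq_0_imp: "a *\<^sub>C x = 0 \<Longrightarrow> a \<noteq> 0 \<Longrightarrow> x = 0"
  by (metis scaleC_scaleC scaleC_one scaleC_zero_right left_inverse)

lemma cnj_mult_self: "cnj z * z = complex_of_real ((cmod z)\<^sup>2)"
  by (metis complex_norm_square mult.commute)

lemma cinner_self: "cinner x x = complex_of_real ((norm x)\<^sup>2)"
proof -
  have "Im (cinner x x) = 0"
    using arg_cong[OF cinner_commute[of x x], of Im] by simp
  moreover have "(norm x)\<^sup>2 = Re (cinner x x)"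
    using cinner_self_nonneg[of x] by (simp only: norm_eq_sqrt_cinner real_sqrt_pow2)
  ultimately show ?thesis by (simp add: complex_eq_iff)
qed

lemma power2_norm_eq_cinner: "(norm x)\<^sup>2 = Re (cinner x x)"
  by (simp only: cinner_self Re_complex_of_real)

lemma norm_scaleC: "norm (a *\<^sub>C x) = cmod a * norm x"
proof -
  have *: "cinner (a *\<^sub>C x) (a *\<^sub>C x) = (a * cnj a) * cinner x x"
    by (simp only: cinner_scaleC_left cinner_scaleC_right mult.assoc mult.left_commute)
  have "(norm (a *\<^sub>C x))\<^sup>2 = Re (cinner (a *\<^sub>C x) (a *\<^sub>C x))"
    by (rule power2_norm_eq_cinner)
  also have "\<dots> = Re (complex_of_real ((cmod a)\<^sup>2) * complex_of_real ((norm x)\<^sup>2))"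
    unfolding * complex_norm_square cinner_self[of x, symmetric] ..
  also have "\<dots> = (cmod a * norm x)\<^sup>2"
    by (simp only: Re_complex_of_real of_real_mult[symmetric] power_mult_distrib)
  finally show ?thesis
    by (simp add: power2_eq_iff_nonneg)
qed

lemma power2_norm_add: "(norm (x + y))\<^sup>2 = (norm x)\<^sup>2 + (norm y)\<^sup>2 + 2 * Re (cinner x y)"
proof -
  have "cinner (x + y) (x + y) = cinner x x + cinner y y + (cinner x y + cnj (cinner x y))"
    by (simp add: cinner_add_left cinner_add_right cinner_commute[of y x])
  then show ?thesis by (simp add: power2_norm_eq_cinner)
qed

lemma power2_norm_diff: "(norm (x - y))\<^sup>2 = (norm x)\<^sup>2 + (norm y)\<^sup>2 - 2 * Re (cinner x y)"
  using power2_norm_add[of x "- y"] by (simp add: cinner_minus_right)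

lemma parallelogram_law:
  "(norm (x + y))\<^sup>2 + (norm (x - y))\<^sup>2 = 2 * (norm x)\<^sup>2 + 2 * (norm (y::'a::complex_inner))\<^sup>2"
  using power2_norm_add[of x y] power2_norm_diff[of x y] by simp

lemma power2_norm_sub_proj:
  assumes "y \<noteq> 0"
  shows "(norm (x - (cinner x y / complex_of_real ((norm y)\<^sup>2)) *\<^sub>C y))\<^sup>2
          = (norm x)\<^sup>2 - (cmod (cinner x y))\<^sup>2 / (norm y)\<^sup>2"
proof -
  define r where "r = (norm y)\<^sup>2"
  have r: "r > 0" using assms by (simp add: r_def)
  define t where "t = cinner x y / complex_of_real r"
  have "cinner (x - t *\<^sub>C y) (x - t *\<^sub>C y) =
      cinner x x - cnj t * cinner x y - t * cinner y x + t * cnj t * cinner y y"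
    by (simp add: cinner_diff_left cinner_diff_right cinner_scaleC_left cinner_scaleC_right
        algebra_simps)
  also have "\<dots> = cinner x x - complex_of_real ((cmod (cinner x y))\<^sup>2 / r)"
  proof -
    have "(complex_of_real (cmod (cinner x y)))\<^sup>2 = cinner x y * cnj (cinner x y)"
      by (metis complex_norm_square of_real_power)
    then show ?thesis
      using r by (simp add: t_def r_def cinner_self cinner_commute[of y x] field_simps)
  qed
  finally show ?thesis
    by (simp add: r_def t_def power2_norm_eq_cinner)
qed

lemma cauchy_schwarz: "cmod (cinner x y) \<le> norm x * norm y"
proof (cases "y = 0")
  case False
  have "0 \<le> (norm x)\<^sup>2 - (cmod (cinner x y))\<^sup>2 / (norm y)\<^sup>2"
    using power2_norm_sub_proj[OF False, of x] by (metis zero_le_power2)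
  then have "(cmod (cinner x y))\<^sup>2 \<le> (norm x * norm y)\<^sup>2"
    using False by (simp add: field_simps power_mult_distrib)
  then show ?thesis
    by (rule power2_le_imp_le) simp
qed simp

lemma bounded_linear_cinner_left: "bounded_linear (\<lambda>x. cinner x y)"
proof (rule bounded_linear_intro[where K = "norm y"])
  show "cinner (r *\<^sub>R x) y = r *\<^sub>R cinner x y" for r x
    by (simp only: scaleR_scaleC[of r x] cinner_scaleC_left scaleR_conv_of_real)
qed (simp_all add: cinner_add_left cauchy_schwarz)

lemma continuous_on_cinner_left: "continuous_on UNIV (\<lambda>x. cinner x y)"
  by (rule linear_continuous_on[OF bounded_linear_cinner_left])

lemma cinner_eq_0_imp_eq_0: "(\<And>y. cinner x y = 0) \<Longrightarrow> x = 0"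
  using cinner_self_eq_zero by blast

lemma cinner_left_ext: "(\<And>y. cinner x y = cinner z y) \<Longrightarrow> x = z"
  using cinner_eq_0_imp_eq_0[of "x - z"] by (simp add: cinner_diff_left)

lemma cinner_right_ext: "(\<And>y. cinner y x = cinner y z) \<Longrightarrow> x = z"
  by (rule cinner_left_ext) (metis cinner_commute)

lemma clinear_add: "clinear T \<Longrightarrow> T (x + y) = T x + T y"
  by (simp add: clinear_def)

lemma clinear_scaleC: "clinear T \<Longrightarrow> T (a *\<^sub>C x) = a *\<^sub>C T x"
  by (simp add: clinear_def)

lemma clinear_zero: "clinear T \<Longrightarrow> T 0 = 0"
  using clinear_add[of T 0 0] by simp

lemma clinear_diff: "clinear T \<Longrightarrow> T (x - y) = T x - T y"
  using clinear_scaleC[of T "-1" y] clinear_add[of T x "- y"]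
  by (simp add: scaleC_minus1_left)

lemma clinear_norm_preserving_cinner:
  assumes "clinear T" "\<And>x. norm (T x) = norm x"
  shows "cinner (T x) (T y) = cinner x y"
proof -
  have Re: "Re (cinner (T x) (T y)) = Re (cinner x y)" for x y
    using power2_norm_add[of "T x" "T y"] power2_norm_add[of x y] assms
    by (simp add: clinear_add[OF assms(1), symmetric])
  \<comment> \<open>polarization: the imaginary part is the real part against \<open>\<i> y\<close>\<close>
  have "Im (cinner (T x) (T y)) = Im (cinner x y)"
    using Re[of x "\<i> *\<^sub>C y"] by (simp add: clinear_scaleC[OF assms(1)] cinner_scaleC_right)
  with Re show ?thesis
    by (simp add: complex_eq_iff)
qed

section \<open>Projection theorem, Riesz representation and adjoints\<close>

lemma minimizing_sequence_Cauchy: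
  fixes x :: "'a::complex_inner"
  assumes midpoint: "\<And>a b. a \<in> M \<Longrightarrow> b \<in> M \<Longrightarrow> (1/2) *\<^sub>R (a + b) \<in> M"
    and dist_le: "\<And>m. m \<in> M \<Longrightarrow> d \<le> norm (x - m)"
    and ms: "\<And>n. ms n \<in> M" and lim: "(\<lambda>n. norm (x - ms n)) \<longlonglongrightarrow> d"
  shows "Cauchy ms"
proof (rule metric_CauchyI)
  fix e :: real
  assume e: "e > 0"
  define r where "r n = (norm (x - ms n))\<^sup>2 - d\<^sup>2" for n
  have "r \<longlonglongrightarrow> d\<^sup>2 - d\<^sup>2"
    unfolding r_def by (intro tendsto_intros lim)
  moreover have "e\<^sup>2 / 4 > 0"
    using e by simp
  ultimately obtain N where N: "\<And>n. n \<ge> N \<Longrightarrow> \<bar>r n\<bar> < e\<^sup>2 / 4"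
    unfolding LIMSEQ_iff by (metis diff_self real_norm_def diff_zero)
  have d0: "0 \<le> d"
    by (rule LIMSEQ_le_const[OF lim]) simp
  \<comment> \<open>parallelogram law applied to \<open>x - ms a\<close> and \<open>x - ms b\<close>, whose half-sum is
      \<open>x\<close> minus a point of \<open>M\<close>\<close>
  have parallelogram: "(norm (ms a - ms b))\<^sup>2 \<le> 2 * r a + 2 * r b" for a b
  proof -
    have "(norm ((x - ms a) + (x - ms b)))\<^sup>2 + (norm ((x - ms a) - (x - ms b)))\<^sup>2
        = 2 * (norm (x - ms a))\<^sup>2 + 2 * (norm (x - ms b))\<^sup>2"
      by (rule parallelogram_law)
    moreover have "(x - ms a) + (x - ms b) = 2 *\<^sub>R (x - (1/2) *\<^sub>R (ms a + ms b))"
      by (simp add: algebra_simps scaleR_2)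
    moreover have "d\<^sup>2 \<le> (norm (x - (1/2) *\<^sub>R (ms a + ms b)))\<^sup>2"
      using d0 dist_le[OF midpoint[OF ms ms]] by (intro power_mono) auto
    ultimately show ?thesis
      by (simp add: r_def power2_eq_square norm_minus_commute)
  qed
  have "(norm (ms a - ms b))\<^sup>2 < e\<^sup>2" if "a \<ge> N" "b \<ge> N" for a b
    using N[OF that(1)] N[OF that(2)] parallelogram[of a b] by linarith
  then have "dist (ms a) (ms b) < e" if "a \<ge> N" "b \<ge> N" for a b
    using e that by (simp add: dist_norm power2_less_imp_less)
  then show "\<exists>N. \<forall>a\<ge>N. \<forall>b\<ge>N. dist (ms a) (ms b) < e"
    by blast
qed

lemma closed_csubspace_nearest_point:
  fixes x :: "'a::chilbert"
  assumes M: "closed_csubspace M"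
  shows "\<exists>p\<in>M. \<forall>m\<in>M. norm (x - p) \<le> norm (x - m)"
proof -
  define d where "d = Inf ((\<lambda>m. norm (x - m)) ` M)"
  have M0: "0 \<in> M" and Mcl: "closed M"
    using M unfolding closed_csubspace_def by auto
  have bdd: "bdd_below ((\<lambda>m. norm (x - m)) ` M)"
    by (rule bdd_belowI[of _ 0]) auto
  have dist_le: "d \<le> norm (x - m)" if "m \<in> M" for m
    unfolding d_def using that bdd by (auto intro: cInf_lower)
  have "\<exists>m\<in>M. norm (x - m) < d + 1 / (real n + 1)" for n
    using cInf_lessD[of "(\<lambda>m. norm (x - m)) ` M" "d + 1 / (real n + 1)"] M0
    unfolding d_def by auto
  then obtain ms where ms: "\<And>n. ms n \<in> M" "\<And>n. norm (x - ms n) < d + 1 / (real n + 1)"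
    by metis
  have lim: "(\<lambda>n. norm (x - ms n)) \<longlonglongrightarrow> d"
  proof (rule real_tendsto_sandwich[of "\<lambda>n. d" _ _ "\<lambda>n. d + 1 / (real n + 1)"])
    have "(\<lambda>n. 1 / (real n + 1)) \<longlonglongrightarrow> 0"
      using LIMSEQ_Suc[OF lim_inverse_n'] by (simp add: add.commute)
    then show "(\<lambda>n. d + 1 / (real n + 1)) \<longlonglongrightarrow> d"
      using tendsto_add[of "\<lambda>n. d" d sequentially] by fastforce
    show "\<forall>\<^sub>F n in sequentially. norm (x - ms n) \<le> d + 1 / (real n + 1)"
      using ms(2) by (intro always_eventually allI less_imp_le)
  qed (use dist_le ms in auto)
  have midpoint: "(1/2) *\<^sub>R (a + b) \<in> M" if "a \<in> M" "b \<in> M" for a b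
    using M that unfolding closed_csubspace_def by (simp add: scaleR_scaleC)
  obtain p where p: "ms \<longlonglongrightarrow> p"
    using minimizing_sequence_Cauchy[OF midpoint dist_le ms(1) lim]
    by (auto simp: Cauchy_convergent_iff convergent_def)
  have "p \<in> M"
    using Mcl ms(1) p closed_sequentially by blast
  moreover have "(\<lambda>n. norm (x - ms n)) \<longlonglongrightarrow> norm (x - p)"
    using p by (intro tendsto_intros)
  then have "norm (x - p) = d"
    using LIMSEQ_unique[OF _ lim] by blast
  ultimately show ?thesis
    using dist_le by auto
qed

lemma orthogonal_projection_exists:
  fixes x :: "'a::chilbert"
  assumes M: "closed_csubspace M"
  shows "\<exists>p\<in>M. \<forall>y\<in>M. cinner (x - p) y = 0"
proof -
  obtain p where pM: "p \<in> M" and nearest: "\<And>m. m \<in> M \<Longrightarrow> norm (x - p) \<le> norm (x - m)"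
    using closed_csubspace_nearest_point[OF M] by blast
  have "cinner (x - p) y = 0" if y: "y \<in> M" for y
  proof (rule ccontr)
    assume ne: "cinner (x - p) y \<noteq> 0"
    then have y0: "y \<noteq> 0" by auto
    define t where "t = cinner (x - p) y / complex_of_real ((norm y)\<^sup>2)"
    have "p + t *\<^sub>C y \<in> M"
      using M pM y unfolding closed_csubspace_def by blast
    then have "(norm (x - p))\<^sup>2 \<le> (norm ((x - p) - t *\<^sub>C y))\<^sup>2"
      using nearest by (simp add: algebra_simps power_mono)
    also have "\<dots> = (norm (x - p))\<^sup>2 - (cmod (cinner (x - p) y))\<^sup>2 / (norm y)\<^sup>2"
      unfolding t_def by (rule power2_norm_sub_proj[OF y0])
    finally have "(cmod (cinner (x - p) y))\<^sup>2 / (norm y)\<^sup>2 \<le> 0"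
      by simp
    moreover have "(cmod (cinner (x - p) y))\<^sup>2 / (norm y)\<^sup>2 > 0"
      using ne y0 by simp
    ultimately show False
      by linarith
  qed
  then show ?thesis
    using pM by blast
qed

lemma closed_csubspace_kernel:
  fixes f :: "'a::chilbert \<Rightarrow> complex"
  assumes "bounded_linear f" and "\<And>a x. f (a *\<^sub>C x) = a * f x"
  shows "closed_csubspace {x. f x = 0}"
  unfolding closed_csubspace_def
proof (intro conjI ballI allI)
  show "closed {x. f x = 0}"
    using closed_Collect_eq[OF linear_continuous_on[OF assms(1)] continuous_on_const] by simp
qed (use assms linear_simps(1,3)[OF assms(1)] in auto)

lemma riesz_representation:
  fixes f :: "'a::chilbert \<Rightarrow> complex"
  assumes add: "\<And>x y. f (x + y) = f x + f y" and scale: "\<And>a x. f (a *\<^sub>C x) = a * f x"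
    and bounded: "\<And>x. cmod (f x) \<le> norm x * K"
  shows "\<exists>z. \<forall>x. f x = cinner x z"
proof (cases "\<forall>x. f x = 0")
  case False
  have bl: "bounded_linear f"
  proof (rule bounded_linear_intro[where K = K])
    show "f (r *\<^sub>R x) = r *\<^sub>R f x" for r x
      by (simp only: scaleR_scaleC[of r x] scale scaleR_conv_of_real)
  qed (simp_all add: add bounded)
  have diff: "f (x - y) = f x - f y" for x y
    by (rule linear_simps(2)[OF bl])
  then obtain x0 where x0: "f x0 \<noteq> 0"
    using False by blast
  obtain p where p: "f p = 0" "\<And>y. f y = 0 \<Longrightarrow> cinner (x0 - p) y = 0"
    using orthogonal_projection_exists[OF closed_csubspace_kernel[OF bl scale], of x0] by blast
  \<comment> \<open>\<open>w\<close> is orthogonal to the kernel, which contains \<open>x - (f x / f w) w\<close>\<close>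
  define w where "w = x0 - p"
  have fw: "f w \<noteq> 0"
    using p(1) x0 by (simp add: w_def diff)
  have key: "cinner x w = (f x / f w) * cinner w w" for x
  proof -
    have "cinner w (x - (f x / f w) *\<^sub>C w) = 0"
      using p(2)[of "x - (f x / f w) *\<^sub>C w"] fw by (simp add: w_def diff scale)
    then have "cinner (x - (f x / f w) *\<^sub>C w) w = 0"
      using cinner_commute[of w "x - (f x / f w) *\<^sub>C w"] by simp
    then show ?thesis
      by (simp add: cinner_diff_left cinner_scaleC_left)
  qed
  have "w \<noteq> 0"
    using fw linear_simps(3)[OF bl] by auto
  then have "f x = cinner x ((cnj (f w) / complex_of_real ((norm w)\<^sup>2)) *\<^sub>C w)" for x
    using fw by (simp add: cinner_scaleC_right key cinner_self)
  then show ?thesis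
    by blast
qed (auto intro: exI[of _ 0])

definition is_adjoint :: "('a::chilbert \<Rightarrow> 'a) \<Rightarrow> ('a \<Rightarrow> 'a) \<Rightarrow> bool" where
  "is_adjoint T S \<longleftrightarrow> (\<forall>x y. cinner (T x) y = cinner x (S y))"

lemma adj_eqI:
  assumes "is_adjoint T S"
  shows "adj T = S"
  unfolding adj_def
proof (rule the_equality)
  show "\<forall>x y. cinner (T x) y = cinner x (S y)"
    using assms by (simp add: is_adjoint_def)
  fix S'
  assume "\<forall>x y. cinner (T x) y = cinner x (S' y)"
  then have "cinner x (S' y) = cinner x (S y)" for x y
    using assms by (simp add: is_adjoint_def)
  then show "S' = S"
    by (blast intro: cinner_right_ext)
qed

lemma adjoint_exists:
  assumes "cbounded_linear T"
  shows "\<exists>S. is_adjoint T S"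
proof -
  obtain K where K: "\<And>x. norm (T x) \<le> norm x * K" and lin: "clinear T"
    using assms unfolding cbounded_linear_def by blast
  have "\<exists>z. \<forall>x. cinner (T x) y = cinner x z" for y
  proof (rule riesz_representation[where K = "K * norm y"])
    show "cmod (cinner (T x) y) \<le> norm x * (K * norm y)" for x
      using cauchy_schwarz[of "T x" y] K[of x] mult_right_mono[OF K[of x], of "norm y"]
      by (simp add: mult.assoc)
  qed (simp_all add: clinear_add[OF lin] clinear_scaleC[OF lin] cinner_add_left
      cinner_scaleC_left)
  then show ?thesis
    unfolding is_adjoint_def by metis
qed

lemma is_adjoint_adj: "cbounded_linear T \<Longrightarrow> is_adjoint T (adj T)"
  using adjoint_exists adj_eqI by blast

lemma cinner_adj_right: "cbounded_linear T \<Longrightarrow> cinner (T x) y = cinner x (adj T y)"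
  using is_adjoint_adj unfolding is_adjoint_def by blast

lemma cinner_adj_left: "cbounded_linear T \<Longrightarrow> cinner (adj T y) x = cinner y (T x)"
  using cinner_commute[of "adj T y" x] cinner_commute[of y "T x"] cinner_adj_right[of T x y]
  by simp

lemma is_adjoint_sym: "is_adjoint T S \<Longrightarrow> is_adjoint S T"
  unfolding is_adjoint_def
  by (metis (no_types) cinner_commute[of "S _"] cinner_commute[of _ "T _"])

lemma normal_op_norm_eq:
  assumes adj: "is_adjoint T S" and normal: "normal_op T"
  shows "norm (T x) = norm (S x)"
proof -
  have TS: "T (S z) = S (T z)" for z
    using normal unfolding normal_op_def adj_eqI[OF adj] by (metis comp_apply)
  have "cinner (T x) (T x) = cinner x (S (T x))"
    using adj unfolding is_adjoint_def by blast
  also have "\<dots> = cinner x (T (S x))"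
    by (simp only: TS)
  also have "\<dots> = cinner (S x) (S x)"
    using is_adjoint_sym[OF adj] unfolding is_adjoint_def by simp
  finally have "(norm (T x))\<^sup>2 = (norm (S x))\<^sup>2"
    by (simp add: power2_norm_eq_cinner)
  then show ?thesis
    by (simp add: power2_eq_iff_nonneg)
qed

lemma compact_op_zero: "compact_op (\<lambda>x::'a::chilbert. 0)"
proof -
  have "(\<lambda>x::'a. 0::'a) ` {x. norm x \<le> 1} = {0}"
    by (auto intro: image_eqI[of _ _ 0])
  then show ?thesis
    by (simp add: compact_op_def cbounded_linear_def clinear_def) (rule exI[of _ 0], simp)
qed

lemma normal_op_zero: "normal_op (\<lambda>x::'a::chilbert. 0)"
proof -
  have "adj (\<lambda>x::'a. 0) = (\<lambda>x. 0)"
    by (rule adj_eqI) (simp add: is_adjoint_def)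
  then show ?thesis
    by (simp add: normal_op_def comp_def)
qed

lemma is_adjoint_comp: "is_adjoint T S \<Longrightarrow> is_adjoint T' S' \<Longrightarrow> is_adjoint (T \<circ> T') (S' \<circ> S)"
  unfolding is_adjoint_def by simp

lemma is_adjoint_clinear:
  assumes "is_adjoint T S"
  shows "clinear S"
proof -
  have S: "cinner x (S y) = cinner (T x) y" for x y
    using assms by (simp add: is_adjoint_def)
  show ?thesis
    unfolding clinear_def
    by (intro conjI allI; rule cinner_right_ext) (simp_all add: S cinner_add_right cinner_scaleC_right)
qed

lemma clinear_adj: "cbounded_linear T \<Longrightarrow> clinear (adj T)"
  by (rule is_adjoint_clinear[OF is_adjoint_adj])

lemma isometry_cinner: "isometry V \<Longrightarrow> cinner (V x) (V y) = cinner x y"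
  unfolding isometry_def cbounded_linear_def by (blast intro: clinear_norm_preserving_cinner)

lemma adj_isometry_cancel: "isometry V \<Longrightarrow> adj V (V x) = x"
  by (rule cinner_right_ext)
     (simp add: cinner_adj_right[symmetric] isometry_cinner isometry_def)

section \<open>Orthonormal families\<close>

lemma summable_on_Cauchy_criterion:
  fixes f :: "'i \<Rightarrow> 'a::{real_normed_vector, complete_space}"
  assumes small_tails: "\<And>e. e > 0 \<Longrightarrow>
    \<exists>F0. finite F0 \<and> (\<forall>F. finite F \<and> F0 \<subseteq> F \<longrightarrow> norm (sum f F - sum f F0) < e)"
  shows "f summable_on UNIV"
proof -
  have "\<exists>P. eventually P (finite_subsets_at_top UNIV) \<and>
      (\<forall>F1 F2. P F1 \<and> P F2 \<longrightarrow> dist (sum f F1) (sum f F2) < e)" if e: "e > 0" for e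
  proof -
    obtain F0 where F0: "finite F0" "\<And>F. finite F \<Longrightarrow> F0 \<subseteq> F \<Longrightarrow> norm (sum f F - sum f F0) < e / 2"
      using small_tails[of "e / 2"] e by auto
    have "dist (sum f F1) (sum f F2) < e" if "finite F1" "F0 \<subseteq> F1" "finite F2" "F0 \<subseteq> F2" for F1 F2
      using dist_triangle2[of "sum f F1" "sum f F2" "sum f F0"] F0(2)[of F1] F0(2)[of F2] that
      by (simp add: dist_norm)
    moreover have "eventually (\<lambda>F. finite F \<and> F0 \<subseteq> F) (finite_subsets_at_top UNIV)"
      unfolding eventually_finite_subsets_at_top using F0(1) by blast
    ultimately show ?thesis
      by blast
  qed
  then have "cauchy_filter (filtermap (sum f) (finite_subsets_at_top UNIV))"
    by (simp add: cauchy_filter_metric_filtermap)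
  moreover have "complete (UNIV :: 'a set)"
    by (meson Cauchy_convergent UNIV_I complete_def convergent_def)
  ultimately obtain L where "(sum f \<longlongrightarrow> L) (finite_subsets_at_top UNIV)"
    using complete_uniform[where S = UNIV] by (force simp add: filterlim_def)
  then show ?thesis
    unfolding summable_on_def has_sum_def by blast
qed

locale orthonormal_family =
  fixes f :: "'i \<Rightarrow> 'a::chilbert"
  assumes cinner_f: "\<And>i j. cinner (f i) (f j) = (if i = j then 1 else 0)"
begin

lemma cinner_sum_scaleC_f:
  "finite F \<Longrightarrow> cinner (\<Sum>k\<in>F. d k *\<^sub>C f k) (f j) = (if j \<in> F then d j else 0)"
proof -
  assume F: "finite F"
  have "cinner (\<Sum>k\<in>F. d k *\<^sub>C f k) (f j) = (\<Sum>k\<in>F. d k * (if k = j then 1 else 0))"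
    by (simp add: cinner_sum_left cinner_scaleC_left cinner_f)
  also have "\<dots> = (\<Sum>k\<in>F. if k = j then d k else 0)"
    by (rule sum.cong) auto
  also have "\<dots> = (if j \<in> F then d j else 0)"
    using F by (simp add: sum.delta)
  finally show ?thesis .
qed

lemma power2_norm_sum_scaleC_f:
  assumes "finite F"
  shows "(norm (\<Sum>k\<in>F. d k *\<^sub>C f k))\<^sup>2 = (\<Sum>k\<in>F. (cmod (d k))\<^sup>2)"
proof -
  have "cinner (\<Sum>k\<in>F. d k *\<^sub>C f k) (\<Sum>k\<in>F. d k *\<^sub>C f k) = (\<Sum>k\<in>F. cnj (d k) * d k)"
    using assms by (simp add: cinner_sum_right cinner_scaleC_right cinner_sum_scaleC_f)
  also have "\<dots> = complex_of_real (\<Sum>k\<in>F. (cmod (d k))\<^sup>2)"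
    by (simp add: cnj_mult_self)
  finally show ?thesis
    by (simp add: power2_norm_eq_cinner)
qed

lemma bessel_inequality_finite:
  assumes "finite F"
  shows "(\<Sum>k\<in>F. (cmod (cinner x (f k)))\<^sup>2) \<le> (norm x)\<^sup>2"
proof -
  define s where "s = (\<Sum>k\<in>F. cinner x (f k) *\<^sub>C f k)"
  define b where "b = (\<Sum>k\<in>F. (cmod (cinner x (f k)))\<^sup>2)"
  have xs: "cinner x s = complex_of_real b"
    by (simp add: s_def b_def cinner_sum_right cinner_scaleC_right cnj_mult_self)
  have ss: "cinner s s = complex_of_real b"
    using power2_norm_sum_scaleC_f[OF assms, of "\<lambda>k. cinner x (f k)"]
    by (simp add: s_def b_def cinner_self)
  have "0 \<le> Re (cinner (x - s) (x - s))"
    by (rule cinner_self_nonneg)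
  also have "cinner (x - s) (x - s) = cinner x x - cinner x s - cnj (cinner x s) + cinner s s"
    by (simp add: cinner_diff_left cinner_diff_right cinner_commute[of s x])
  finally show ?thesis
    using xs ss by (simp add: b_def power2_norm_eq_cinner)
qed

lemma summable_on_coeff_sq: "(\<lambda>k. (cmod (cinner x (f k)))\<^sup>2) summable_on UNIV"
  by (rule nonneg_bdd_above_summable_on)
     (auto intro!: bdd_aboveI[where M = "(norm x)\<^sup>2"] bessel_inequality_finite)

lemma summable_on_scaleC_f:
  assumes sq: "(\<lambda>k. (cmod (d k))\<^sup>2) summable_on UNIV"
  shows "(\<lambda>k. d k *\<^sub>C f k) summable_on UNIV"
proof (rule summable_on_Cauchy_criterion)
  fix e :: real
  assume e: "e > 0"
  define g where "g = (\<lambda>k. (cmod (d k))\<^sup>2)"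
  have "(g has_sum infsum g UNIV) UNIV"
    using sq by (simp add: g_def)
  then have "eventually (\<lambda>F. dist (sum g F) (infsum g UNIV) < e\<^sup>2 / 2) (finite_subsets_at_top UNIV)"
    unfolding has_sum_def by (rule tendstoD) (use e in simp)
  then obtain F0 where F0: "finite F0"
    "\<And>F. finite F \<Longrightarrow> F0 \<subseteq> F \<Longrightarrow> dist (sum g F) (infsum g UNIV) < e\<^sup>2 / 2"
    unfolding eventually_finite_subsets_at_top by (elim exE conjE) blast
  have "norm (sum (\<lambda>k. d k *\<^sub>C f k) F - sum (\<lambda>k. d k *\<^sub>C f k) F0) < e"
    if F: "finite F" "F0 \<subseteq> F" for F
  proof -
    have "sum (\<lambda>k. d k *\<^sub>C f k) F - sum (\<lambda>k. d k *\<^sub>C f k) F0 = sum (\<lambda>k. d k *\<^sub>C f k) (F - F0)"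
      using F by (simp add: sum_diff)
    then have "(norm (sum (\<lambda>k. d k *\<^sub>C f k) F - sum (\<lambda>k. d k *\<^sub>C f k) F0))\<^sup>2 = sum g (F - F0)"
      using F by (simp add: power2_norm_sum_scaleC_f g_def)
    also have "\<dots> = sum g F - sum g F0"
      using F by (simp add: sum_diff)
    also have "\<dots> < e\<^sup>2"
      using F0(2)[OF F] F0(2)[OF F0(1) order.refl] unfolding dist_real_def by arith
    finally show ?thesis
      using e by (simp add: power2_less_imp_less)
  qed
  then show "\<exists>F0. finite F0 \<and> (\<forall>F. finite F \<and> F0 \<subseteq> F \<longrightarrow>
      norm (sum (\<lambda>k. d k *\<^sub>C f k) F - sum (\<lambda>k. d k *\<^sub>C f k) F0) < e)"
    using F0(1) by blast
qed

lemma has_sum_scaleC_f_coeff: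
  assumes "((\<lambda>k. d k *\<^sub>C f k) has_sum s) UNIV"
  shows "cinner s (f j) = d j"
proof -
  have "((\<lambda>k. cinner (d k *\<^sub>C f k) (f j)) has_sum cinner s (f j)) UNIV"
    by (rule has_sum_bounded_linear[OF bounded_linear_cinner_left assms])
  moreover have "((\<lambda>k. cinner (d k *\<^sub>C f k) (f j)) has_sum d j) UNIV"
    by (rule has_sum_finite_neutralI[where B = "{j}"]) (auto simp: cinner_scaleC_left cinner_f)
  ultimately show ?thesis
    using has_sum_unique by blast
qed

lemma has_sum_scaleC_f_norm:
  assumes sq: "(\<lambda>k. (cmod (d k))\<^sup>2) summable_on UNIV"
    and s: "((\<lambda>k. d k *\<^sub>C f k) has_sum s) UNIV"
  shows "(norm s)\<^sup>2 = (\<Sum>\<^sub>\<infinity>k. (cmod (d k))\<^sup>2)"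
proof -
  have "((\<lambda>F. (norm (\<Sum>k\<in>F. d k *\<^sub>C f k))\<^sup>2) \<longlongrightarrow> (norm s)\<^sup>2) (finite_subsets_at_top UNIV)"
    using s unfolding has_sum_def by (intro tendsto_intros)
  moreover have "((\<lambda>F. \<Sum>k\<in>F. (cmod (d k))\<^sup>2) \<longlongrightarrow> (\<Sum>\<^sub>\<infinity>k. (cmod (d k))\<^sup>2)) (finite_subsets_at_top UNIV)"
    using sq unfolding summable_iff_has_sum_infsum has_sum_def .
  then have "((\<lambda>F. (norm (\<Sum>k\<in>F. d k *\<^sub>C f k))\<^sup>2) \<longlongrightarrow> (\<Sum>\<^sub>\<infinity>k. (cmod (d k))\<^sup>2)) (finite_subsets_at_top UNIV)"
    by (rule Lim_transform_eventually)
       (auto simp: eventually_finite_subsets_at_top power2_norm_sum_scaleC_f intro!: exI[of _ "{}"])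
  ultimately show ?thesis
    using tendsto_unique finite_subsets_at_top_neq_bot by blast
qed

end

locale orthonormal_basis = orthonormal_family +
  assumes complete: "\<And>x. (\<And>k. cinner x (f k) = 0) \<Longrightarrow> x = 0"
begin

lemma coeff_eqI: "(\<And>k. cinner x (f k) = cinner y (f k)) \<Longrightarrow> x = y"
  using complete[of "x - y"] by (simp add: cinner_diff_left)

lemma has_sum_expansion: "((\<lambda>k. cinner x (f k) *\<^sub>C f k) has_sum x) UNIV"
proof -
  obtain s where s: "((\<lambda>k. cinner x (f k) *\<^sub>C f k) has_sum s) UNIV"
    using summable_on_scaleC_f[OF summable_on_coeff_sq] unfolding summable_on_def by blast
  moreover have "x = s"
    using has_sum_scaleC_f_coeff[OF s] by (auto intro: coeff_eqI)
  ultimately show ?thesis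
    by simp
qed

lemma parseval: "(norm x)\<^sup>2 = (\<Sum>\<^sub>\<infinity>k. (cmod (cinner x (f k)))\<^sup>2)"
  by (rule has_sum_scaleC_f_norm[OF summable_on_coeff_sq has_sum_expansion])

end

section \<open>The Hardy space of the bidisc in terms of Taylor coefficients\<close>

lemma summable_on_geometric_prod:
  fixes a b :: real
  assumes "0 \<le> a" "a < 1" "0 \<le> b" "b < 1"
  shows "(\<lambda>(m, n). a ^ m * b ^ n) summable_on UNIV"
proof -
  have geometric: "((\<lambda>n. r ^ n) has_sum 1 / (1 - r)) UNIV" if "0 \<le> r" "r < 1" for r :: real
    using that by (intro sums_nonneg_imp_has_sum geometric_sums) auto
  have "(\<lambda>(m, n). a ^ m * b ^ n) summable_on UNIV \<times> UNIV"
  proof (rule summable_on_SigmaI)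
    show "((\<lambda>n. (\<lambda>(m, n). a ^ m * b ^ n) (m, n)) has_sum a ^ m * (1 / (1 - b))) UNIV" for m
      using has_sum_cmult_right[OF geometric[OF assms(3,4)], of "a ^ m"] by simp
    show "(\<lambda>m. a ^ m * (1 / (1 - b))) summable_on UNIV"
      using geometric[OF assms(1,2)] by (intro summable_on_cmult_left) (auto simp: summable_on_def)
  qed (use assms in auto)
  then show ?thesis
    by simp
qed

lemma infsum_diagonal_tail_tendsto_0:
  fixes g :: "nat \<times> nat \<Rightarrow> real"
  assumes summable: "g summable_on UNIV" and nonneg: "\<And>k. 0 \<le> g k"
  shows "(\<lambda>m. \<Sum>\<^sub>\<infinity>k. g (fst k + m, snd k + m)) \<longlonglongrightarrow> 0"
proof (rule LIMSEQ_I)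
  fix \<epsilon> :: real
  assume "\<epsilon> > 0"
  have "(g has_sum infsum g UNIV) UNIV"
    using summable by simp
  then have "eventually (\<lambda>F. dist (sum g F) (infsum g UNIV) < \<epsilon>) (finite_subsets_at_top UNIV)"
    unfolding has_sum_def using \<open>\<epsilon> > 0\<close> by (rule tendstoD)
  then obtain F0 where F0: "finite F0" "dist (sum g F0) (infsum g UNIV) < \<epsilon>"
    unfolding eventually_finite_subsets_at_top by blast
  define M where "M = Suc (Max (fst ` F0))"
  have M: "fst k < M" if "k \<in> F0" for k
    using that F0(1) by (auto simp: M_def le_imp_less_Suc)
  have "norm (\<Sum>\<^sub>\<infinity>k. g (fst k + m, snd k + m)) < \<epsilon>" if "m \<ge> M" for m
  proof -
    define h where "h k = (fst k + m, snd k + m)" for k :: "nat \<times> nat"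
    have "inj h"
      by (auto simp: h_def inj_def)
    \<comment> \<open>the shifted indices avoid \<open>F0\<close>, so their sum is bounded by the tail outside \<open>F0\<close>\<close>
    have "range h \<subseteq> UNIV - F0"
      using M that by (force simp: h_def)
    have tail: "g summable_on (UNIV - F0)"
      using summable by (rule summable_on_subset_banach) simp
    have "(\<Sum>\<^sub>\<infinity>k. g (fst k + m, snd k + m)) = infsum g (range h)"
      using infsum_reindex[OF \<open>inj h\<close>, of g] by (simp add: comp_def h_def)
    also have "\<dots> \<le> infsum g (UNIV - F0)"
      using \<open>range h \<subseteq> UNIV - F0\<close> nonneg
      by (intro infsum_mono_neutral summable_on_subset_banach[OF summable] tail) auto
    also have "\<dots> = infsum g UNIV - sum g F0"
      using infsum_Un_disjoint[of g F0 "UNIV - F0"] F0(1) tail by (simp add: Un_absorb1)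
    also have "\<dots> < \<epsilon>"
      using F0(2) by (simp add: dist_real_def)
    finally show ?thesis
      using infsum_nonneg[of "UNIV" "\<lambda>k. g (fst k + m, snd k + m)"] nonneg by simp
  qed
  then show "\<exists>M. \<forall>m\<ge>M. norm ((\<Sum>\<^sub>\<infinity>k. g (fst k + m, snd k + m)) - 0) < \<epsilon>"
    by auto
qed

lemma sq_summable_coeffs_bounded:
  assumes "sq_summable_coeffs c"
  obtains B where "\<And>k. cmod (c k) \<le> B"
proof
  fix k
  have "(cmod (c k))\<^sup>2 = (\<Sum>j\<in>{k}. (cmod (c j))\<^sup>2)"
    by simp
  also have "\<dots> \<le> (\<Sum>\<^sub>\<infinity>j. (cmod (c j))\<^sup>2)"
    using assms unfolding sq_summable_coeffs_def by (intro finite_sum_le_infsum) auto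
  finally show "cmod (c k) \<le> sqrt (\<Sum>\<^sub>\<infinity>j. (cmod (c j))\<^sup>2)"
    by (simp add: real_le_rsqrt)
qed

lemma summable_on_bounded_coeff_powers:
  fixes c :: "nat \<times> nat \<Rightarrow> complex"
  assumes B: "\<And>k. cmod (c k) \<le> B" and "cmod z < 1" "cmod w < 1"
  shows "(\<lambda>(m, n). c (m, n) * z ^ m * w ^ n) summable_on UNIV"
proof (rule abs_summable_summable)
  have "(\<lambda>(m, n). B * (cmod z ^ m * cmod w ^ n)) summable_on UNIV"
    using summable_on_cmult_right[OF summable_on_geometric_prod[of "cmod z" "cmod w"]] assms(2,3)
    by (simp add: case_prod_unfold)
  then show "(\<lambda>k. norm ((\<lambda>(m, n). c (m, n) * z ^ m * w ^ n) k)) summable_on UNIV"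
    by (rule summable_on_comparison_test)
       (auto simp: norm_mult norm_power mult.assoc intro!: mult_right_mono B)
qed

lemma summable_on_H2_terms:
  assumes "sq_summable_coeffs c" "(z, w) \<in> bidisc"
  shows "(\<lambda>(m, n). c (m, n) * z ^ m * w ^ n) summable_on UNIV"
proof -
  obtain B where "\<And>k. cmod (c k) \<le> B"
    using sq_summable_coeffs_bounded[OF assms(1)] by blast
  then show ?thesis
    using summable_on_bounded_coeff_powers[of c B z w] assms(2) by (simp add: bidisc_def)
qed

lemma powser_eq_0_imp_coeff_eq_0:
  fixes a :: "nat \<Rightarrow> complex"
  assumes "\<And>z. cmod z < 1 \<Longrightarrow> (\<lambda>n. a n * z ^ n) sums 0"
  shows "a k = 0"
proof (rule ccontr)
  assume ak: "a k \<noteq> 0"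
  show False
  proof (cases "k = 0")
    case True
    then show False
      using assms[of 0] ak by simp
  next
    case False
    show False
    proof (rule powser_0_nonzero[of 1 0 a "\<lambda>_. 0" k])
      fix s :: real
      assume "0 < s" and "\<And>z::complex. z \<in> cball 0 s - {0} \<Longrightarrow> 0 \<noteq> 0"
      moreover have "complex_of_real s \<in> cball 0 s - {0}"
        using \<open>0 < s\<close> by simp
      ultimately show False
        by blast
    qed (use assms ak False in auto)
  qed
qed

lemma summable_on_bounded_coeff_row:
  fixes c :: "nat \<times> nat \<Rightarrow> complex"
  assumes B: "\<And>k. cmod (c k) \<le> B" and "cmod w < 1"
  shows "(\<lambda>n. c (m, n) * w ^ n) summable_on UNIV"
proof (rule abs_summable_summable)
  have "(\<lambda>n. B * cmod w ^ n) summable_on UNIV"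
    using assms(2) by (intro summable_on_cmult_right summable_nonneg_imp_summable_on summable_geometric) auto
  then show "(\<lambda>n. norm (c (m, n) * w ^ n)) summable_on UNIV"
    by (rule summable_on_comparison_test) (auto simp: norm_mult norm_power intro!: mult_right_mono B)
qed

text \<open>Identity theorem: first in \<open>z\<close> for every fixed \<open>w\<close>, then in \<open>w\<close>.\<close>

lemma H2_fun_eq_0_imp_coeff_eq_0:
  assumes sq: "sq_summable_coeffs c" and zero: "\<And>p. H2_fun c p = 0"
  shows "c k = 0"
proof -
  obtain m n where k: "k = (m, n)"
    by (cases k)
  obtain B where B: "\<And>k. cmod (c k) \<le> B"
    using sq_summable_coeffs_bounded[OF sq] by blast
  define row where "row w m = (\<Sum>\<^sub>\<infinity>n. c (m, n) * w ^ n)" for w m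
  have has_sum_row: "((\<lambda>n. c (m, n) * w ^ n) has_sum row w m) UNIV" if "cmod w < 1" for w m
    using summable_on_bounded_coeff_row[of c B w m] B that by (simp add: row_def)
  have row_0: "row w m = 0" if w: "cmod w < 1" for w m
  proof (rule powser_eq_0_imp_coeff_eq_0)
    fix z :: complex
    assume z: "cmod z < 1"
    define F where "F = (\<lambda>(m, n). c (m, n) * z ^ m * w ^ n)"
    have "(z, w) \<in> bidisc"
      using z w by (simp add: bidisc_def)
    then have "F summable_on UNIV" and "infsum F UNIV = 0"
      using summable_on_H2_terms[OF sq] zero[of "(z, w)"] by (simp_all add: F_def H2_fun_def)
    then have "(F has_sum 0) (UNIV \<times> UNIV)"
      using has_sum_infsum by fastforce
    moreover have "((\<lambda>n. F (m, n)) has_sum (z ^ m * row w m)) UNIV" for m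
      using has_sum_cmult_right[OF has_sum_row[OF w], of "z ^ m"]
      by (simp add: F_def algebra_simps)
    ultimately have "((\<lambda>m. z ^ m * row w m) has_sum 0) UNIV"
      by (rule has_sum_SigmaD)
    then show "(\<lambda>m. row w m * z ^ m) sums 0"
      by (simp add: has_sum_imp_sums mult.commute)
  qed
  have "c (m, n) = 0"
    by (rule powser_eq_0_imp_coeff_eq_0[where a = "\<lambda>n. c (m, n)"])
       (use has_sum_row row_0 in \<open>fastforce intro: has_sum_imp_sums\<close>)
  then show ?thesis
    by (simp add: k)
qed

lemma sq_summable_coeffs_add:
  assumes "sq_summable_coeffs c" "sq_summable_coeffs d"
  shows "sq_summable_coeffs (\<lambda>k. c k + d k)"
proof -
  have bound: "(cmod (a + b))\<^sup>2 \<le> 2 * (cmod a)\<^sup>2 + 2 * (cmod b)\<^sup>2" for a b :: complex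
    using power_mono[OF norm_triangle_ineq[of a b], of 2] sum_squares_bound[of "cmod a" "cmod b"]
    by (simp add: power2_eq_square algebra_simps)
  have "(\<lambda>k. 2 * (cmod (c k))\<^sup>2 + 2 * (cmod (d k))\<^sup>2) summable_on UNIV"
    using assms unfolding sq_summable_coeffs_def by (intro summable_on_add summable_on_cmult_right)
  then show ?thesis
    unfolding sq_summable_coeffs_def by (rule summable_on_comparison_test) (auto intro: bound)
qed

lemma sq_summable_coeffs_scale: "sq_summable_coeffs c \<Longrightarrow> sq_summable_coeffs (\<lambda>k. a * c k)"
  unfolding sq_summable_coeffs_def by (simp add: norm_mult power_mult_distrib summable_on_cmult_right)

lemma H2_fun_add:
  assumes c: "sq_summable_coeffs c" and d: "sq_summable_coeffs d"
  shows "H2_fun (\<lambda>k. c k + d k) = (\<lambda>p. H2_fun c p + H2_fun d p)"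
proof
  fix p :: "complex \<times> complex"
  obtain z w where p: "p = (z, w)"
    by (cases p)
  show "H2_fun (\<lambda>k. c k + d k) p = H2_fun c p + H2_fun d p"
  proof (cases "(z, w) \<in> bidisc")
    case True
    have "(\<Sum>\<^sub>\<infinity>(m, n). (c (m, n) + d (m, n)) * z ^ m * w ^ n)
        = (\<Sum>\<^sub>\<infinity>k. (\<lambda>(m, n). c (m, n) * z ^ m * w ^ n) k + (\<lambda>(m, n). d (m, n) * z ^ m * w ^ n) k)"
      by (rule infsum_cong) (auto simp: algebra_simps)
    also have "\<dots> = (\<Sum>\<^sub>\<infinity>(m, n). c (m, n) * z ^ m * w ^ n) + (\<Sum>\<^sub>\<infinity>(m, n). d (m, n) * z ^ m * w ^ n)"
      by (rule infsum_add[OF summable_on_H2_terms[OF c True] summable_on_H2_terms[OF d True]])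
    finally show ?thesis
      using True by (simp add: p H2_fun_def)
  qed (simp add: p H2_fun_def)
qed

lemma H2_fun_scale: "H2_fun (\<lambda>k. a * c k) = (\<lambda>p. a * H2_fun c p)"
proof
  fix p :: "complex \<times> complex"
  have "(\<Sum>\<^sub>\<infinity>(m, n). a * c (m, n) * z ^ m * w ^ n) = a * (\<Sum>\<^sub>\<infinity>(m, n). c (m, n) * z ^ m * w ^ n)"
    for z w
    by (subst infsum_cmult_right'[symmetric]) (auto intro: infsum_cong simp: algebra_simps)
  then show "H2_fun (\<lambda>k. a * c k) p = a * H2_fun c p"
    by (cases p) (simp add: H2_fun_def)
qed

lemma H2_fun_inj:
  assumes c: "sq_summable_coeffs c" and d: "sq_summable_coeffs d" and eq: "H2_fun c = H2_fun d"
  shows "c = d"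
proof -
  have d': "sq_summable_coeffs (\<lambda>k. (-1) * d k)"
    by (rule sq_summable_coeffs_scale[OF d])
  have "H2_fun (\<lambda>k. c k + (-1) * d k) p = 0" for p
    using H2_fun_add[OF c d'] H2_fun_scale[of "-1" d] eq by simp
  then have "c k + (-1) * d k = 0" for k
    by (rule H2_fun_eq_0_imp_coeff_eq_0[OF sq_summable_coeffs_add[OF c d']])
  then show ?thesis
    by (auto simp: fun_eq_iff)
qed

lemma H2_coeff_H2_fun: "sq_summable_coeffs c \<Longrightarrow> H2_coeff (H2_fun c) = c"
  unfolding H2_coeff_def by (rule the_equality) (auto intro: H2_fun_inj)

lemma H2_fun_H2_coeff:
  "f \<in> H2 \<Longrightarrow> sq_summable_coeffs (H2_coeff f) \<and> H2_fun (H2_coeff f) = f"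
  unfolding H2_def using H2_coeff_H2_fun by auto

lemma H2_fun_in_H2: "sq_summable_coeffs c \<Longrightarrow> H2_fun c \<in> H2"
  unfolding H2_def by blast

lemma H2_norm_H2_fun: "sq_summable_coeffs c \<Longrightarrow> H2_norm (H2_fun c) = sqrt (\<Sum>\<^sub>\<infinity>k. (cmod (c k))\<^sup>2)"
  unfolding H2_norm_def by (simp add: H2_coeff_H2_fun)

definition shift_z :: "(nat \<times> nat \<Rightarrow> complex) \<Rightarrow> nat \<times> nat \<Rightarrow> complex" where
  "shift_z c = (\<lambda>(m, n). if m = 0 then 0 else c (m - 1, n))"

definition shift_w :: "(nat \<times> nat \<Rightarrow> complex) \<Rightarrow> nat \<times> nat \<Rightarrow> complex" where
  "shift_w c = (\<lambda>(m, n). if n = 0 then 0 else c (m, n - 1))"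

lemma not_in_range_apfst_Suc: "k \<notin> range (apfst Suc) \<Longrightarrow> fst k = 0"
  by (cases k) (auto simp: image_iff, metis not0_implies_Suc)

lemma not_in_range_apsnd_Suc: "k \<notin> range (apsnd Suc) \<Longrightarrow> snd k = 0"
  by (cases k) (auto simp: image_iff, metis not0_implies_Suc)

lemma sq_summable_coeffs_shift_z: "sq_summable_coeffs c \<Longrightarrow> sq_summable_coeffs (shift_z c)"
  unfolding sq_summable_coeffs_def
proof -
  assume "(\<lambda>k. (cmod (c k))\<^sup>2) summable_on UNIV"
  then have "(\<lambda>k. (cmod (shift_z c k))\<^sup>2) summable_on range (apfst Suc)"
    by (simp add: summable_on_reindex comp_def shift_z_def case_prod_unfold)
  also have "?this \<longleftrightarrow> (\<lambda>k. (cmod (shift_z c k))\<^sup>2) summable_on UNIV"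
    by (rule summable_on_cong_neutral)
       (auto dest!: not_in_range_apfst_Suc simp: shift_z_def split: prod.splits)
  finally show "(\<lambda>k. (cmod (shift_z c k))\<^sup>2) summable_on UNIV" .
qed

lemma sq_summable_coeffs_shift_w: "sq_summable_coeffs c \<Longrightarrow> sq_summable_coeffs (shift_w c)"
  unfolding sq_summable_coeffs_def
proof -
  assume "(\<lambda>k. (cmod (c k))\<^sup>2) summable_on UNIV"
  then have "(\<lambda>k. (cmod (shift_w c k))\<^sup>2) summable_on range (apsnd Suc)"
    by (simp add: summable_on_reindex comp_def shift_w_def case_prod_unfold)
  also have "?this \<longleftrightarrow> (\<lambda>k. (cmod (shift_w c k))\<^sup>2) summable_on UNIV"
    by (rule summable_on_cong_neutral)
       (auto dest!: not_in_range_apsnd_Suc simp: shift_w_def split: prod.splits)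
  finally show "(\<lambda>k. (cmod (shift_w c k))\<^sup>2) summable_on UNIV" .
qed

lemma H2_fun_shift_z: "H2_fun (shift_z c) = Mz (H2_fun c)"
proof
  fix p :: "complex \<times> complex"
  obtain z w where p: "p = (z, w)"
    by (cases p)
  define G where "G = (\<lambda>(m, n). shift_z c (m, n) * z ^ m * w ^ n)"
  have "infsum G UNIV = infsum G (range (apfst Suc))"
    by (rule infsum_cong_neutral)
       (auto dest!: not_in_range_apfst_Suc simp: G_def shift_z_def split: prod.splits)
  also have "\<dots> = infsum (G \<circ> apfst Suc) UNIV"
    by (simp add: infsum_reindex)
  also have "\<dots> = (\<Sum>\<^sub>\<infinity>k. z * (\<lambda>(m, n). c (m, n) * z ^ m * w ^ n) k)"
    by (rule infsum_cong) (auto simp: G_def shift_z_def algebra_simps)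
  also have "\<dots> = z * (\<Sum>\<^sub>\<infinity>(m, n). c (m, n) * z ^ m * w ^ n)"
    by (rule infsum_cmult_right')
  finally show "H2_fun (shift_z c) p = Mz (H2_fun c) p"
    by (simp add: p H2_fun_def Mz_def G_def)
qed

lemma H2_fun_shift_w: "H2_fun (shift_w c) = Mw (H2_fun c)"
proof
  fix p :: "complex \<times> complex"
  obtain z w where p: "p = (z, w)"
    by (cases p)
  define G where "G = (\<lambda>(m, n). shift_w c (m, n) * z ^ m * w ^ n)"
  have "infsum G UNIV = infsum G (range (apsnd Suc))"
    by (rule infsum_cong_neutral)
       (auto dest!: not_in_range_apsnd_Suc simp: G_def shift_w_def split: prod.splits)
  also have "\<dots> = infsum (G \<circ> apsnd Suc) UNIV"
    by (simp add: infsum_reindex)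
  also have "\<dots> = (\<Sum>\<^sub>\<infinity>k. w * (\<lambda>(m, n). c (m, n) * z ^ m * w ^ n) k)"
    by (rule infsum_cong) (auto simp: G_def shift_w_def algebra_simps)
  also have "\<dots> = w * (\<Sum>\<^sub>\<infinity>(m, n). c (m, n) * z ^ m * w ^ n)"
    by (rule infsum_cmult_right')
  finally show "H2_fun (shift_w c) p = Mw (H2_fun c) p"
    by (simp add: p H2_fun_def Mw_def G_def)
qed

section \<open>Operators of rank one\<close>

context
begin

interpretation cvs: vector_space "scaleC :: complex \<Rightarrow> 'a \<Rightarrow> 'a::complex_inner"
  by unfold_locales (simp_all add: scaleC_add_right scaleC_add_left scaleC_scaleC scaleC_one)

lemma crank_eq_1_imp_range_line:
  fixes T :: "'a::chilbert \<Rightarrow> 'a"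
  assumes lin: "clinear T" and rank: "crank T = 1"
  obtains u where "norm u = 1" "range T = range (\<lambda>a. a *\<^sub>C u)"
proof -
  obtain B where B: "B \<subseteq> range T" "cvs.independent B" "range T \<subseteq> cvs.span B"
      "card B = cvs.dim (range T)"
    by (rule cvs.basis_exists)
  then obtain w where w: "B = {w}"
    using rank by (auto simp: crank_def intro: card_1_singletonE)
  have "cvs.subspace (range T)"
    unfolding cvs.subspace_def
  proof (intro conjI ballI allI)
    show "0 \<in> range T"
      using clinear_zero[OF lin] by (metis rangeI)
    show "x + y \<in> range T" if "x \<in> range T" "y \<in> range T" for x y
      using that by (auto simp flip: clinear_add[OF lin])
    show "a *\<^sub>C x \<in> range T" if "x \<in> range T" for a x
      using that by (auto simp flip: clinear_scaleC[OF lin])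
  qed
  then have "cvs.span {w} = range T"
    using cvs.span_subspace[of "{w}" "range T"] B w by simp
  then have range_w: "range T = range (\<lambda>a. a *\<^sub>C w)"
    by (simp add: cvs.span_singleton)
  have "w \<noteq> 0"
    using B(2) w by auto
  define u where "u = complex_of_real (1 / norm w) *\<^sub>C w"
  have "norm u = 1"
    using \<open>w \<noteq> 0\<close> by (simp add: u_def norm_scaleC norm_divide)
  have "a *\<^sub>C w = (a * complex_of_real (norm w)) *\<^sub>C u" "a *\<^sub>C u = (a / complex_of_real (norm w)) *\<^sub>C w"
    for a
    using \<open>w \<noteq> 0\<close> by (simp_all add: u_def scaleC_scaleC)
  then have "range (\<lambda>a. a *\<^sub>C w) = range (\<lambda>a. a *\<^sub>C u)"
    by (metis (no_types, lifting) image_subset_iff rangeI subset_antisym)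
  then show ?thesis
    using that \<open>norm u = 1\<close> range_w by simp
qed

lemma crank_range_line:
  fixes w :: "'a::chilbert"
  assumes "w \<noteq> 0" "range T = range (\<lambda>a. a *\<^sub>C w)"
  shows "crank T = 1"
proof -
  have "crank T = cvs.dim (cvs.span {w})"
    using assms(2) by (simp add: crank_def cvs.span_singleton)
  also have "\<dots> = 1"
    using assms(1) by (simp add: cvs.dim_span cvs.dim_eq_card_independent)
  finally show ?thesis .
qed

end

lemma selfadjoint_range_line:
  fixes C :: "'a::chilbert \<Rightarrow> 'a"
  assumes sa: "is_adjoint C C" and u: "norm u = 1" and range: "range C = range (\<lambda>a. a *\<^sub>C u)"
  obtains \<beta> where "\<beta> \<noteq> 0" "\<And>x. C x = (complex_of_real \<beta> * cinner x u) *\<^sub>C u"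
proof -
  have uu: "cinner u u = 1"
    using u by (simp add: cinner_self)
  have on_line: "\<exists>a. C x = a *\<^sub>C u" for x
    using range by blast
  obtain \<gamma> where \<gamma>: "C u = \<gamma> *\<^sub>C u"
    using on_line by blast
  have C_sym: "cinner (C x) y = cinner x (C y)" for x y
    using sa unfolding is_adjoint_def by blast
  have form: "C x = (cnj \<gamma> * cinner x u) *\<^sub>C u" for x
  proof -
    obtain a where a: "C x = a *\<^sub>C u"
      using on_line by blast
    have "a = cinner x (C u)"
      using a uu C_sym[of x u] by (simp add: cinner_scaleC_left)
    then show ?thesis
      by (simp add: a \<gamma> cinner_scaleC_right)
  qed
  have "\<gamma> = cnj \<gamma>"
    using C_sym[of u u] uu by (simp add: \<gamma> cinner_scaleC_left cinner_scaleC_right)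
  then have real: "cnj \<gamma> = complex_of_real (Re \<gamma>)"
    by (metis Reals_cnj_iff complex_is_Real_iff of_real_Re)
  have "Re \<gamma> \<noteq> 0"
  proof
    assume "Re \<gamma> = 0"
    then have "C x = 0" for x
      using form real by simp
    moreover have "u \<in> range C"
      using range by (metis rangeI scaleC_one)
    ultimately show False
      using u by auto
  qed
  then show ?thesis
    using that[of "Re \<gamma>"] form real by simp
qed

section \<open>Commuting isometries: the defect operator and the cross-commutator\<close>

locale commuting_isometries =
  fixes V1 V2 :: "'a::chilbert \<Rightarrow> 'a"
  assumes pair: "isometric_pair V1 V2"
begin

abbreviation "A1 \<equiv> adj V1"
abbreviation "A2 \<equiv> adj V2"
abbreviation "defect \<equiv> defect_op V1 V2"
abbreviation "cross \<equiv> cross_comm V1 V2"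

lemma isometry_V1: "isometry V1" and isometry_V2: "isometry V2"
  using pair unfolding isometric_pair_def by auto

lemma bounded_V1: "cbounded_linear V1" and bounded_V2: "cbounded_linear V2"
  using isometry_V1 isometry_V2 unfolding isometry_def by auto

lemma clinear_V1: "clinear V1" and clinear_V2: "clinear V2"
  using bounded_V1 bounded_V2 unfolding cbounded_linear_def by auto

lemma clinear_A1: "clinear A1" and clinear_A2: "clinear A2"
  using bounded_V1 bounded_V2 clinear_adj by auto

lemma cinner_A1_right: "cinner (V1 x) y = cinner x (A1 y)"
  and cinner_A2_right: "cinner (V2 x) y = cinner x (A2 y)"
  and cinner_A1_left: "cinner (A1 y) x = cinner y (V1 x)"
  and cinner_A2_left: "cinner (A2 y) x = cinner y (V2 x)"
  using cinner_adj_right cinner_adj_left bounded_V1 bounded_V2 by blast+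

lemma A1_V1 [simp]: "A1 (V1 x) = x" and A2_V2 [simp]: "A2 (V2 x) = x"
  using adj_isometry_cancel isometry_V1 isometry_V2 by blast+

lemma norm_V1 [simp]: "norm (V1 x) = norm x" and norm_V2 [simp]: "norm (V2 x) = norm x"
  using isometry_V1 isometry_V2 unfolding isometry_def by blast+

lemma V1_V2_commute: "V1 (V2 x) = V2 (V1 x)"
  using pair unfolding isometric_pair_def by (metis comp_apply)

lemma A1_A2_commute: "A1 (A2 x) = A2 (A1 x)"
  by (rule cinner_right_ext) (simp only: cinner_A1_right[symmetric] cinner_A2_right[symmetric] V1_V2_commute)

lemma zero_simps [simp]: "V1 0 = 0" "V2 0 = 0" "A1 0 = 0" "A2 0 = 0"
  using clinear_zero clinear_V1 clinear_V2 clinear_A1 clinear_A2 by blast+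

lemmas clinear_simps =
  clinear_add[OF clinear_V1] clinear_add[OF clinear_V2] clinear_add[OF clinear_A1] clinear_add[OF clinear_A2]
  clinear_diff[OF clinear_V1] clinear_diff[OF clinear_V2] clinear_diff[OF clinear_A1] clinear_diff[OF clinear_A2]
  clinear_scaleC[OF clinear_V1] clinear_scaleC[OF clinear_V2] clinear_scaleC[OF clinear_A1]
  clinear_scaleC[OF clinear_A2]

lemma defect_apply: "defect x = x - V1 (A1 x) - V2 (A2 x) + V1 (V2 (A1 (A2 x)))"
  by (simp add: defect_op_def)

lemma cross_apply: "cross x = A2 (V1 x) - V1 (A2 x)"
  by (simp add: cross_comm_def)

lemma defect_op_swap: "defect_op V2 V1 = defect"
  by (rule ext) (simp add: defect_op_def A1_A2_commute V1_V2_commute algebra_simps)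

lemma is_adjoint_defect: "is_adjoint defect defect"
  unfolding is_adjoint_def defect_apply
proof (intro allI)
  fix x y
  have "cinner (V1 (V2 (A1 (A2 x)))) y = cinner (A2 (A1 x)) (A1 (A2 y))"
    by (simp only: cinner_A1_right cinner_A2_right A1_A2_commute)
  also have "\<dots> = cinner x (V1 (V2 (A1 (A2 y))))"
    by (simp only: cinner_A1_left cinner_A2_left)
  finally show "cinner (x - V1 (A1 x) - V2 (A2 x) + V1 (V2 (A1 (A2 x)))) y
      = cinner x (y - V1 (A1 y) - V2 (A2 y) + V1 (V2 (A1 (A2 y))))"
    by (simp only: cinner_add_left cinner_diff_left cinner_add_right cinner_diff_right
        cinner_A1_right cinner_A2_right cinner_A1_left cinner_A2_left)
qed

lemma is_adjoint_cross: "is_adjoint cross (cross_comm V2 V1)"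
  unfolding is_adjoint_def cross_apply
  by (simp add: cross_comm_def cinner_diff_left cinner_diff_right cinner_A1_right cinner_A2_right
      cinner_A2_left)

lemma A1_A2_defect: "A1 (A2 (defect x)) = 0"
  by (simp add: defect_apply clinear_simps A1_A2_commute V1_V2_commute)

lemma power2_norm_cross: "(norm (cross x))\<^sup>2 = (norm (A2 (V1 x)))\<^sup>2 - (norm (A2 x))\<^sup>2"
proof -
  have "cinner (A2 (V1 x)) (V1 (A2 x)) = cinner (A2 x) (A2 x)"
    by (simp only: cinner_A1_left[symmetric] A1_A2_commute A1_V1)
  then show ?thesis
    unfolding cross_apply power2_norm_diff by (simp add: power2_norm_eq_cinner)
qed

lemma cinner_defect_V1: "Re (cinner (defect (V1 x)) (V1 x)) = - (norm (cross x))\<^sup>2"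
proof -
  have "cinner (defect (V1 x)) (V1 x) = - cinner (A2 (V1 x)) (A2 (V1 x)) + cinner (A2 x) (A2 x)"
    by (simp add: defect_apply cinner_add_left cinner_diff_left cinner_A1_right cinner_A2_right
        A1_A2_commute isometry_cinner[OF isometry_V1])
  then show ?thesis
    using power2_norm_cross[of x] by (simp add: power2_norm_eq_cinner)
qed

end

lemma isometric_pair_swap: "isometric_pair V1 V2 \<Longrightarrow> isometric_pair V2 V1"
  unfolding isometric_pair_def by auto

section \<open>A rank-one defect and a normal cross-commutator force double commutativity\<close>

context commuting_isometries
begin

lemma cinner_defect_rank_one:
  assumes "\<And>x. defect x = (complex_of_real \<beta> * cinner x u) *\<^sub>C u"
  shows "Re (cinner (defect y) y) = \<beta> * (cmod (cinner y u))\<^sup>2"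
proof -
  have "cinner (defect y) y = complex_of_real \<beta> * (cinner y u * cnj (cinner y u))"
    by (simp add: assms cinner_scaleC_left cinner_commute[of y u] mult.assoc)
  also have "\<dots> = complex_of_real (\<beta> * (cmod (cinner y u))\<^sup>2)"
    by (simp only: complex_norm_square[symmetric] of_real_mult)
  finally show ?thesis
    by simp
qed

lemma power2_norm_cross_rank_one:
  assumes "\<And>x. defect x = (complex_of_real \<beta> * cinner x u) *\<^sub>C u"
  shows "(norm (cross x))\<^sup>2 = - \<beta> * (cmod (cinner x (A1 u)))\<^sup>2"
  using cinner_defect_V1[of x] cinner_defect_rank_one[OF assms, of "V1 x"]
  by (simp add: cinner_A1_right)

lemma A1_A2_defect_eigenvector:
  assumes "defect u = \<gamma> *\<^sub>C u" and "\<gamma> \<noteq> 0"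
  shows "A1 (A2 u) = 0"
proof -
  have "\<gamma> *\<^sub>C A1 (A2 u) = 0"
    using A1_A2_defect[of u] assms(1) by (simp only: clinear_simps)
  then show ?thesis
    using assms(2) by (simp add: scaleC_eq_0_imp)
qed

lemma normal_rank_one_defect_cmod_eq:
  assumes normal: "normal_op cross"
    and defect: "\<And>x. defect x = (complex_of_real \<beta> * cinner x u) *\<^sub>C u" and "\<beta> \<noteq> 0"
  shows "cmod (cinner x (A1 u)) = cmod (cinner x (A2 u))"
proof -
  interpret swap: commuting_isometries V2 V1
    by unfold_locales (rule isometric_pair_swap[OF pair])
  have "- \<beta> * (cmod (cinner x (A1 u)))\<^sup>2 = (norm (cross x))\<^sup>2"
    by (rule power2_norm_cross_rank_one[OF defect, symmetric])
  also have "\<dots> = (norm (cross_comm V2 V1 x))\<^sup>2"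
    by (simp only: normal_op_norm_eq[OF is_adjoint_cross normal])
  also have "\<dots> = - \<beta> * (cmod (cinner x (A2 u)))\<^sup>2"
    by (rule swap.power2_norm_cross_rank_one) (simp add: defect_op_swap defect)
  finally have "(cmod (cinner x (A1 u)))\<^sup>2 = (cmod (cinner x (A2 u)))\<^sup>2"
    using \<open>\<beta> \<noteq> 0\<close> by simp
  then show ?thesis
    by (simp add: power2_eq_iff_nonneg)
qed

lemma normal_rank_one_defect_imp_cross_eq_0:
  assumes normal: "normal_op cross"
    and defect: "\<And>x. defect x = (complex_of_real \<beta> * cinner x u) *\<^sub>C u"
    and "norm u = 1" "\<beta> \<noteq> 0"
  shows "cross x = 0"
proof -
  define a where "a = A1 u"
  have "defect u = complex_of_real \<beta> *\<^sub>C u"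
    using defect[of u] \<open>norm u = 1\<close> by (simp add: cinner_self)
  then have A1_A2_u: "A1 (A2 u) = 0"
    using \<open>\<beta> \<noteq> 0\<close> by (simp add: A1_A2_defect_eigenvector)
  then have A2_a: "A2 a = 0"
    by (simp add: a_def A1_A2_commute)
  \<comment> \<open>normality gives \<open>|\<langle>V1 y, a\<rangle>| = |\<langle>V1 y, A2 u\<rangle>| = |\<langle>y, A1 (A2 u)\<rangle>| = 0\<close>\<close>
  have A1_a: "A1 a = 0"
  proof (rule cinner_eq_0_imp_eq_0)
    fix y
    have "cinner y (A1 a) = 0"
      using normal_rank_one_defect_cmod_eq[OF normal defect \<open>\<beta> \<noteq> 0\<close>, of "V1 y"] A1_A2_u
      by (simp add: a_def cinner_A1_right)
    then show "cinner (A1 a) y = 0"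
      using cinner_commute[of "A1 a" y] by simp
  qed
  have "defect a = a"
    using A1_a A2_a by (simp add: defect_apply)
  then have "(norm a)\<^sup>2 = \<beta> * (cmod (cinner a u))\<^sup>2"
    using cinner_defect_rank_one[OF defect, of a] by (simp add: power2_norm_eq_cinner)
  then have "(norm a)\<^sup>2 \<le> 0" if "\<beta> < 0"
    using that mult_nonpos_nonneg[of \<beta> "(cmod (cinner a u))\<^sup>2"] by simp
  then have "a = 0" if "\<beta> < 0"
    using that by simp
  then have "(norm (cross x))\<^sup>2 \<le> 0"
    using power2_norm_cross_rank_one[OF defect, of x] \<open>\<beta> \<noteq> 0\<close> unfolding a_def
    by (cases "\<beta> > 0") auto
  then show "cross x = 0"
    by simp
qed

lemma normal_rank_one_defect_imp_doubly_commuting: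
  assumes normal: "normal_op cross" and rank: "crank defect = 1"
  shows "\<forall>x. A2 (V1 x) = V1 (A2 x)" and "\<forall>x. A1 (V2 x) = V2 (A1 x)"
    and "\<exists>e. norm e = 1 \<and> A1 e = 0 \<and> A2 e = 0"
proof -
  have "clinear defect"
    unfolding clinear_def defect_apply
    by (simp add: clinear_simps scaleC_add_right scaleC_diff_right algebra_simps)
  then obtain u where u: "norm u = 1" and "range defect = range (\<lambda>a. a *\<^sub>C u)"
    using crank_eq_1_imp_range_line rank by blast
  then obtain \<beta> where "\<beta> \<noteq> 0"
    and defect: "\<And>x. defect x = (complex_of_real \<beta> * cinner x u) *\<^sub>C u"
    using selfadjoint_range_line[OF is_adjoint_defect] by blast
  have cross_0: "cross x = 0" for x
    by (rule normal_rank_one_defect_imp_cross_eq_0[OF normal defect u \<open>\<beta> \<noteq> 0\<close>])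
  then show dc1: "\<forall>x. A2 (V1 x) = V1 (A2 x)"
    by (simp add: cross_apply)
  have "norm (cross_comm V2 V1 x) = 0" for x
    using normal_op_norm_eq[OF is_adjoint_cross normal, of x] cross_0[of x] by simp
  then show dc2: "\<forall>x. A1 (V2 x) = V2 (A1 x)"
    by (simp add: cross_comm_def)
  \<comment> \<open>the defect now annihilates the ranges of \<open>V1\<close> and \<open>V2\<close>, so its eigenvector \<open>u\<close> is wandering\<close>
  have Du: "defect u = complex_of_real \<beta> *\<^sub>C u"
    using defect[of u] u by (simp add: cinner_self)
  have "complex_of_real \<beta> *\<^sub>C A1 u = 0" and "complex_of_real \<beta> *\<^sub>C A2 u = 0"
    using arg_cong[OF Du, of A1] arg_cong[OF Du, of A2] dc1 dc2
    by (simp_all add: defect_apply clinear_simps V1_V2_commute A1_A2_commute)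
  then have "A1 u = 0" "A2 u = 0"
    using \<open>\<beta> \<noteq> 0\<close> by (simp_all add: scaleC_eq_0_imp)
  then show "\<exists>e. norm e = 1 \<and> A1 e = 0 \<and> A2 e = 0"
    using u by blast
qed

end

section \<open>Doubly commuting pairs with a wandering unit vector\<close>

locale doubly_commuting_pair = commuting_isometries +
  fixes e :: 'a
  assumes A2_V1: "\<And>x. A2 (V1 x) = V1 (A2 x)"
    and A1_V2: "\<And>x. A1 (V2 x) = V2 (A1 x)"
    and norm_e: "norm e = 1" and A1_e: "A1 e = 0" and A2_e: "A2 e = 0"
begin

text \<open>The vectors \<open>shift_basis (m, n)\<close> play the role of the monomials \<open>z\<^sup>m w\<^sup>n\<close>.\<close>

definition shift_basis :: "nat \<times> nat \<Rightarrow> 'a" where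
  "shift_basis k = (V1 ^^ fst k) ((V2 ^^ snd k) e)"

lemma V1_shift_basis: "V1 (shift_basis (m, n)) = shift_basis (Suc m, n)"
  by (simp add: shift_basis_def)

lemma V2_shift_basis: "V2 (shift_basis (m, n)) = shift_basis (m, Suc n)"
proof -
  have "V2 ((V1 ^^ m) x) = (V1 ^^ m) (V2 x)" for x
    by (induction m) (simp_all add: V1_V2_commute[symmetric])
  then show ?thesis
    by (simp add: shift_basis_def)
qed

lemma A1_shift_basis: "A1 (shift_basis (m, n)) = (if m = 0 then 0 else shift_basis (m - 1, n))"
proof -
  have "A1 ((V2 ^^ n) x) = (V2 ^^ n) (A1 x)" for x
    by (induction n) (simp_all add: A1_V2)
  moreover have "(V2 ^^ n) 0 = 0"
    by (induction n) simp_all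
  ultimately show ?thesis
    by (cases m) (simp_all add: shift_basis_def A1_e)
qed

lemma A2_shift_basis: "A2 (shift_basis (m, n)) = (if n = 0 then 0 else shift_basis (m, n - 1))"
proof -
  have "A2 ((V1 ^^ m) x) = (V1 ^^ m) (A2 x)" for x
    by (induction m) (simp_all add: A2_V1)
  moreover have "(V1 ^^ m) 0 = 0"
    by (induction m) simp_all
  ultimately show ?thesis
    by (cases n) (simp_all add: shift_basis_def A2_e)
qed

lemma cinner_A1_shift_basis: "cinner (A1 x) (shift_basis (m, n)) = cinner x (shift_basis (Suc m, n))"
  by (simp add: cinner_A1_left V1_shift_basis)

lemma cinner_A2_shift_basis: "cinner (A2 x) (shift_basis (m, n)) = cinner x (shift_basis (m, Suc n))"
  by (simp add: cinner_A2_left V2_shift_basis)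

lemma cinner_e_shift_basis: "cinner e (shift_basis (p, q)) = (if p = 0 \<and> q = 0 then 1 else 0)"
proof (cases p)
  case 0
  show ?thesis
  proof (cases q)
    case 0
    then show ?thesis
      using \<open>p = 0\<close> norm_e by (simp add: shift_basis_def cinner_self)
  next
    case (Suc q')
    have "cinner e (shift_basis (p, q)) = cinner (A2 e) (shift_basis (0, q'))"
      using \<open>p = 0\<close> Suc by (simp only: V2_shift_basis[symmetric] cinner_A2_left)
    then show ?thesis
      using Suc by (simp add: A2_e)
  qed
next
  case (Suc p')
  have "cinner e (shift_basis (p, q)) = cinner (A1 e) (shift_basis (p', q))"
    using Suc by (simp only: V1_shift_basis[symmetric] cinner_A1_left)
  then show ?thesis
    using Suc by (simp add: A1_e)
qed

lemma cinner_shift_basis_pair: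
  "cinner (shift_basis (m, n)) (shift_basis (p, q)) = (if (m, n) = (p, q) then 1 else 0)"
proof (induction m arbitrary: p)
  case 0
  show ?case
  proof (induction n arbitrary: q)
    case 0
    have "shift_basis (0, 0) = e"
      by (simp add: shift_basis_def)
    then show ?case
      by (simp add: cinner_e_shift_basis)
  next
    case (Suc n)
    have "cinner (shift_basis (0, Suc n)) (shift_basis (p, q))
        = cinner (shift_basis (0, n)) (A2 (shift_basis (p, q)))"
      by (simp only: V2_shift_basis[symmetric] cinner_A2_right)
    also have "\<dots> = (if q = 0 then 0 else cinner (shift_basis (0, n)) (shift_basis (p, q - 1)))"
      by (simp add: A2_shift_basis)
    finally show ?case
      using Suc.IH[of "q - 1"] by auto
  qed
next
  case (Suc m)
  have "cinner (shift_basis (Suc m, n)) (shift_basis (p, q))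
      = cinner (shift_basis (m, n)) (A1 (shift_basis (p, q)))"
    by (simp only: V1_shift_basis[symmetric] cinner_A1_right)
  also have "\<dots> = (if p = 0 then 0 else cinner (shift_basis (m, n)) (shift_basis (p - 1, q)))"
    by (simp add: A1_shift_basis)
  finally show ?case
    using Suc.IH[of "p - 1"] by auto
qed

sublocale orthonormal_family shift_basis
  by unfold_locales (metis cinner_shift_basis_pair prod.collapse)

lemma cinner_V1_shift_basis:
  "cinner (V1 x) (shift_basis k) = shift_z (\<lambda>k. cinner x (shift_basis k)) k"
proof -
  obtain m n where k: "k = (m, n)"
    by (cases k)
  show ?thesis
    unfolding k cinner_A1_right by (cases m) (simp_all add: A1_shift_basis shift_z_def)
qed

lemma cinner_V2_shift_basis:
  "cinner (V2 x) (shift_basis k) = shift_w (\<lambda>k. cinner x (shift_basis k)) k"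
proof -
  obtain m n where k: "k = (m, n)"
    by (cases k)
  show ?thesis
    unfolding k cinner_A2_right by (cases n) (simp_all add: A2_shift_basis shift_w_def)
qed

lemma closed_csubspace_orthogonal_shift_basis:
  "closed_csubspace {x. \<forall>k. cinner x (shift_basis k) = 0}"
  unfolding closed_csubspace_def
proof (intro conjI ballI allI)
  show "closed {x. \<forall>k. cinner x (shift_basis k) = 0}"
    by (intro closed_Collect_all closed_Collect_eq continuous_on_cinner_left continuous_on_const)
qed (simp_all add: cinner_add_left cinner_scaleC_left)

lemma shift_basis_complete:
  assumes irreducible: "irreducible_pair V1 V2" and x: "\<And>k. cinner x (shift_basis k) = 0"
  shows "x = 0"
proof -
  define N where "N = {x. \<forall>k. cinner x (shift_basis k) = 0}"
  have A1: "cinner (A1 y) (shift_basis k) = cinner y (shift_basis (Suc (fst k), snd k))"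
    and A2: "cinner (A2 y) (shift_basis k) = cinner y (shift_basis (fst k, Suc (snd k)))" for y k
    using cinner_A1_shift_basis[of y "fst k" "snd k"] cinner_A2_shift_basis[of y "fst k" "snd k"]
    by simp_all
  have "V1 ` N \<subseteq> N" "V2 ` N \<subseteq> N" "A1 ` N \<subseteq> N" "A2 ` N \<subseteq> N"
    by (auto simp: N_def cinner_V1_shift_basis cinner_V2_shift_basis shift_z_def shift_w_def A1 A2
        split: prod.splits)
  then have "N = {0} \<or> N = UNIV"
    using irreducible[unfolded irreducible_pair_def, rule_format, of N]
      closed_csubspace_orthogonal_shift_basis
    by (simp add: N_def)
  moreover have "e \<notin> N"
    using cinner_e_shift_basis[of 0 0] unfolding N_def by force
  ultimately have "N = {0}"
    by auto
  moreover have "x \<in> N"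
    using x by (simp add: N_def)
  ultimately show ?thesis
    by simp
qed

end

locale irreducible_doubly_commuting_pair = doubly_commuting_pair +
  assumes irreducible: "irreducible_pair V1 V2"
begin

sublocale orthonormal_basis shift_basis
  by unfold_locales (rule shift_basis_complete[OF irreducible])

definition coeff_map :: "'a \<Rightarrow> complex \<times> complex \<Rightarrow> complex" where
  "coeff_map x = H2_fun (\<lambda>k. cinner x (shift_basis k))"

lemma sq_summable_coeffs_shift_basis: "sq_summable_coeffs (\<lambda>k. cinner x (shift_basis k))"
  unfolding sq_summable_coeffs_def by (rule summable_on_coeff_sq)

lemma bij_betw_coeff_map: "bij_betw coeff_map UNIV H2"
  unfolding bij_betw_def
proof
  show "inj coeff_map"
  proof (rule injI)
    fix x y
    assume "coeff_map x = coeff_map y"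
    then have "(\<lambda>k. cinner x (shift_basis k)) = (\<lambda>k. cinner y (shift_basis k))"
      unfolding coeff_map_def
      by (rule H2_fun_inj[OF sq_summable_coeffs_shift_basis sq_summable_coeffs_shift_basis])
    then show "x = y"
      by (intro coeff_eqI) metis
  qed
  show "range coeff_map = H2"
  proof
    show "range coeff_map \<subseteq> H2"
      unfolding coeff_map_def using H2_fun_in_H2[OF sq_summable_coeffs_shift_basis] by blast
    show "H2 \<subseteq> range coeff_map"
    proof
      fix f
      assume "f \<in> H2"
      then obtain c where c: "sq_summable_coeffs c" "f = H2_fun c"
        unfolding H2_def by blast
      then obtain s where s: "((\<lambda>k. c k *\<^sub>C shift_basis k) has_sum s) UNIV"
        using summable_on_scaleC_f[of c] unfolding sq_summable_coeffs_def summable_on_def by blast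
      then have "coeff_map s = f"
        using has_sum_scaleC_f_coeff[OF s] c(2) by (simp add: coeff_map_def)
      then show "f \<in> range coeff_map"
        by blast
    qed
  qed
qed

lemma unitarily_equiv: "unitarily_equiv_Mz_Mw V1 V2"
  unfolding unitarily_equiv_Mz_Mw_def unitary_to_H2_def
proof (intro exI[of _ coeff_map] conjI allI bij_betw_coeff_map)
  show "coeff_map (V1 x) = Mz (coeff_map x)" for x
    unfolding coeff_map_def cinner_V1_shift_basis by (rule H2_fun_shift_z)
  show "coeff_map (V2 x) = Mw (coeff_map x)" for x
    unfolding coeff_map_def cinner_V2_shift_basis by (rule H2_fun_shift_w)
  show "coeff_map (x + y) = (\<lambda>p. coeff_map x p + coeff_map y p)" for x y
    unfolding coeff_map_def cinner_add_left
    by (rule H2_fun_add[OF sq_summable_coeffs_shift_basis sq_summable_coeffs_shift_basis])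
  show "coeff_map (a *\<^sub>C x) = (\<lambda>p. a * coeff_map x p)" for a x
    unfolding coeff_map_def cinner_scaleC_left by (rule H2_fun_scale)
  show "H2_norm (coeff_map x) = norm x" for x
    unfolding coeff_map_def H2_norm_H2_fun[OF sq_summable_coeffs_shift_basis] parseval[of x, symmetric]
    by simp
qed

lemma defect_eq_projection_e: "defect x = cinner x e *\<^sub>C e"
proof -
  have "shift_basis (0, 0) = e"
    by (simp add: shift_basis_def)
  moreover have "A1 (defect x) = 0" "A2 (defect x) = 0"
    by (simp_all add: defect_apply clinear_simps A2_V1 A1_V2 V1_V2_commute A1_A2_commute)
  \<comment> \<open>a vector killed by \<open>A1\<close> and \<open>A2\<close> is orthogonal to all \<open>shift_basis k\<close> with \<open>k \<noteq> (0, 0)\<close>\<close>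
  then have "cinner (defect x) (shift_basis (m, n)) = (if m = 0 \<and> n = 0 then cinner (defect x) e else 0)"
    for m n
    by (cases m; cases n)
       (simp_all add: shift_basis_def[of "(0, 0)"] V1_shift_basis[symmetric] V2_shift_basis[symmetric]
         cinner_A1_left[symmetric] cinner_A2_left[symmetric])
  moreover have "cinner (defect x) e = cinner x e"
    using is_adjoint_defect A1_e A2_e by (simp add: is_adjoint_def defect_apply)
  ultimately have "cinner (defect x) (shift_basis k) = cinner (cinner x e *\<^sub>C e) (shift_basis k)" for k
    by (cases k) (auto simp: cinner_scaleC_left cinner_e_shift_basis)
  then show ?thesis
    by (rule coeff_eqI)
qed

lemma crank_defect: "crank defect = 1"
proof (rule crank_range_line)
  show "e \<noteq> 0"
    using norm_e by auto
  have "defect (a *\<^sub>C e) = a *\<^sub>C e" for a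
    using norm_e by (simp add: defect_eq_projection_e cinner_scaleC_left cinner_self)
  then show "range defect = range (\<lambda>a. a *\<^sub>C e)"
    by (auto simp: defect_eq_projection_e) (metis rangeI)
qed

lemma cinner_A2_A1_power_shift_basis:
  "cinner (((A2 \<circ> A1) ^^ m) x) (shift_basis (p, q)) = cinner x (shift_basis (p + m, q + m))"
  by (induction m arbitrary: p q) (simp_all add: cinner_A2_shift_basis cinner_A1_shift_basis)

lemma is_shift_V1_V2: "is_shift (V1 \<circ> V2)"
  unfolding is_shift_def
proof (intro conjI allI)
  show "isometry (V1 \<circ> V2)"
    unfolding isometry_def cbounded_linear_def clinear_def
    by (auto simp: clinear_simps intro!: exI[of _ 1])
  have adj: "adj (V1 \<circ> V2) = A2 \<circ> A1"
    using is_adjoint_adj[OF bounded_V1] is_adjoint_adj[OF bounded_V2]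
    by (intro adj_eqI is_adjoint_comp)
  fix x
  define g where "g k = (cmod (cinner x (shift_basis k)))\<^sup>2" for k
  have "(\<lambda>m. (norm (((A2 \<circ> A1) ^^ m) x))\<^sup>2) = (\<lambda>m. \<Sum>\<^sub>\<infinity>k. g (fst k + m, snd k + m))"
    by (simp add: parseval[of "((A2 \<circ> A1) ^^ _) x"] cinner_A2_A1_power_shift_basis[of _ _ "fst k" "snd k" for k,
        simplified] g_def)
  also have "\<dots> \<longlonglongrightarrow> 0"
    using summable_on_coeff_sq[of x] by (intro infsum_diagonal_tail_tendsto_0) (simp_all add: g_def)
  finally have "(\<lambda>m. (norm (((A2 \<circ> A1) ^^ m) x))\<^sup>2) \<longlonglongrightarrow> 0" .
  then have "(\<lambda>m. sqrt ((norm (((A2 \<circ> A1) ^^ m) x))\<^sup>2)) \<longlonglongrightarrow> sqrt 0"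
    by (rule tendsto_real_sqrt)
  then show "(\<lambda>m. (adj (V1 \<circ> V2) ^^ m) x) \<longlonglongrightarrow> 0"
    by (simp add: adj tendsto_norm_zero_iff)
qed

lemma one_finite: "one_finite_pair V1 V2"
proof -
  have "cross = (\<lambda>x. 0)"
    by (simp add: cross_comm_def A2_V1)
  then show ?thesis
    unfolding one_finite_pair_def compact_normal_pair_def BCL_pair_def
    using pair is_shift_V1_V2 crank_defect compact_op_zero normal_op_zero by simp
qed

end

section \<open>Pairs unitarily equivalent to the model\<close>

definition kronecker :: "nat \<times> nat \<Rightarrow> nat \<times> nat \<Rightarrow> complex" where
  "kronecker j = (\<lambda>k. if k = j then 1 else 0)"

lemma has_sum_kronecker_sq: "((\<lambda>k. (cmod (kronecker j k))\<^sup>2) has_sum 1) UNIV"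
  by (rule has_sum_finite_neutralI[where B = "{j}"]) (auto simp: kronecker_def)

lemma sq_summable_coeffs_kronecker: "sq_summable_coeffs (kronecker j)"
  unfolding sq_summable_coeffs_def using has_sum_kronecker_sq summable_on_def by blast

lemma shift_z_kronecker: "shift_z (kronecker (m, n)) = kronecker (Suc m, n)"
  by (rule ext) (auto simp: shift_z_def kronecker_def split: prod.splits)

lemma shift_w_kronecker: "shift_w (kronecker (m, n)) = kronecker (m, Suc n)"
  by (rule ext) (auto simp: shift_w_def kronecker_def split: prod.splits)

lemma infsum_fun_upd:
  fixes f :: "'i \<Rightarrow> real"
  assumes "f summable_on UNIV"
  shows "infsum (f(j := v)) UNIV = infsum f UNIV - f j + v"
proof -
  have "((\<lambda>k. if k = j then v - f j else 0) has_sum (v - f j)) UNIV"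
    by (rule has_sum_finite_neutralI[where B = "{j}"]) auto
  then have "((\<lambda>k. f k + (if k = j then v - f j else 0)) has_sum (infsum f UNIV + (v - f j))) UNIV"
    using assms by (intro has_sum_add) auto
  moreover have "(\<lambda>k. f k + (if k = j then v - f j else 0)) = f(j := v)"
    by auto
  ultimately show ?thesis
    by (simp add: infsumI)
qed

locale H2_model = commuting_isometries +
  fixes U :: "'a \<Rightarrow> complex \<times> complex \<Rightarrow> complex"
  assumes unitary: "unitary_to_H2 U"
    and U_V1: "\<And>x. U (V1 x) = Mz (U x)" and U_V2: "\<And>x. U (V2 x) = Mw (U x)"
begin

definition coeff :: "'a \<Rightarrow> nat \<times> nat \<Rightarrow> complex" where
  "coeff x = H2_coeff (U x)"

lemma sq_summable_coeffs_coeff: "sq_summable_coeffs (coeff x)"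
  and H2_fun_coeff: "H2_fun (coeff x) = U x"
  using H2_fun_H2_coeff[of "U x"] unitary
  unfolding coeff_def unitary_to_H2_def bij_betw_def by auto

lemma coeff_eq_if_H2_fun: "H2_fun c = U x \<Longrightarrow> sq_summable_coeffs c \<Longrightarrow> coeff x = c"
  unfolding coeff_def by (drule sym) (simp add: H2_coeff_H2_fun)

lemma coeff_add: "coeff (x + y) = (\<lambda>k. coeff x k + coeff y k)"
  using unitary
  by (intro coeff_eq_if_H2_fun sq_summable_coeffs_add sq_summable_coeffs_coeff)
     (simp add: H2_fun_add[OF sq_summable_coeffs_coeff sq_summable_coeffs_coeff] H2_fun_coeff
       unitary_to_H2_def)

lemma coeff_scaleC: "coeff (a *\<^sub>C x) = (\<lambda>k. a * coeff x k)"
  using unitary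
  by (intro coeff_eq_if_H2_fun sq_summable_coeffs_scale sq_summable_coeffs_coeff)
     (simp add: H2_fun_scale H2_fun_coeff unitary_to_H2_def)

lemma coeff_V1: "coeff (V1 x) = shift_z (coeff x)"
  by (intro coeff_eq_if_H2_fun sq_summable_coeffs_shift_z sq_summable_coeffs_coeff)
     (simp add: H2_fun_shift_z H2_fun_coeff U_V1)

lemma coeff_V2: "coeff (V2 x) = shift_w (coeff x)"
  by (intro coeff_eq_if_H2_fun sq_summable_coeffs_shift_w sq_summable_coeffs_coeff)
     (simp add: H2_fun_shift_w H2_fun_coeff U_V2)

lemma coeff_inj: "coeff x = coeff y \<Longrightarrow> x = y"
  using H2_fun_coeff[of x] H2_fun_coeff[of y] unitary
  unfolding unitary_to_H2_def bij_betw_def inj_on_def by auto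

lemma coeff_surj: "sq_summable_coeffs c \<Longrightarrow> \<exists>x. coeff x = c"
  using unitary H2_fun_in_H2[of c] unfolding unitary_to_H2_def bij_betw_def
  by (metis coeff_eq_if_H2_fun rangeE)

lemma power2_norm_eq_coeff: "(norm x)\<^sup>2 = (\<Sum>\<^sub>\<infinity>k. (cmod (coeff x k))\<^sup>2)"
proof -
  have "norm x = sqrt (\<Sum>\<^sub>\<infinity>k. (cmod (coeff x k))\<^sup>2)"
    using unitary unfolding unitary_to_H2_def H2_norm_def coeff_def by simp
  then show ?thesis
    by (simp add: infsum_nonneg)
qed

text \<open>The inner product against a vector with a single nonzero coefficient is read off by
  polarization, since only norms are known to be preserved.\<close>

lemma cinner_coeff_kronecker:
  assumes y: "coeff y = kronecker j"
  shows "cinner x y = coeff x j"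
proof -
  have Re: "Re (cinner x y) = Re (coeff x j)" for x
  proof -
    define f where "f = (\<lambda>k. (cmod (coeff x k))\<^sup>2)"
    have "(norm (x + y))\<^sup>2 = infsum (f(j := (cmod (coeff x j + 1))\<^sup>2)) UNIV"
      unfolding power2_norm_eq_coeff[of "x + y"]
      by (intro infsum_cong) (simp add: coeff_add y kronecker_def f_def)
    also have "\<dots> = infsum f UNIV - f j + (cmod (coeff x j + 1))\<^sup>2"
      using sq_summable_coeffs_coeff[of x]
      by (intro infsum_fun_upd) (simp add: sq_summable_coeffs_def f_def)
    also have "\<dots> = (norm x)\<^sup>2 + 2 * Re (coeff x j) + 1"
      unfolding f_def power2_norm_eq_coeff[of x] cmod_power2
      by (simp add: power2_eq_square algebra_simps)
    finally show ?thesis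
      using power2_norm_add[of x y] power2_norm_eq_coeff[of y] infsumI[OF has_sum_kronecker_sq]
      by (simp add: y)
  qed
  have "Im (cinner x y) = Im (coeff x j)"
    using Re[of "\<i> *\<^sub>C x"] by (simp add: cinner_scaleC_left coeff_scaleC)
  with Re[of x] show ?thesis
    by (simp add: complex_eq_iff)
qed

definition basis_vec :: "nat \<times> nat \<Rightarrow> 'a" where
  "basis_vec j = (SOME y. coeff y = kronecker j)"

lemma coeff_basis_vec: "coeff (basis_vec j) = kronecker j"
  unfolding basis_vec_def using coeff_surj[OF sq_summable_coeffs_kronecker] by (rule someI_ex)

lemma cinner_basis_vec: "cinner x (basis_vec j) = coeff x j"
  by (rule cinner_coeff_kronecker[OF coeff_basis_vec])

lemma coeff_A1: "coeff (A1 x) (m, n) = coeff x (Suc m, n)"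
proof -
  have "V1 (basis_vec (m, n)) = basis_vec (Suc m, n)"
    by (rule coeff_inj) (simp add: coeff_V1 coeff_basis_vec shift_z_kronecker)
  then show ?thesis
    by (simp add: cinner_basis_vec[symmetric] cinner_A1_left)
qed

lemma coeff_A2: "coeff (A2 x) (m, n) = coeff x (m, Suc n)"
proof -
  have "V2 (basis_vec (m, n)) = basis_vec (m, Suc n)"
    by (rule coeff_inj) (simp add: coeff_V2 coeff_basis_vec shift_w_kronecker)
  then show ?thesis
    by (simp add: cinner_basis_vec[symmetric] cinner_A2_left)
qed

lemma A2_V1_commute: "A2 (V1 x) = V1 (A2 x)"
proof (rule coeff_inj, rule ext)
  fix k :: "nat \<times> nat"
  obtain m n where k: "k = (m, n)"
    by (cases k)
  show "coeff (A2 (V1 x)) k = coeff (V1 (A2 x)) k"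
    unfolding k coeff_A2 coeff_V1 by (cases m) (simp_all add: shift_z_def coeff_A2)
qed

lemma A1_V2_commute: "A1 (V2 x) = V2 (A1 x)"
proof (rule coeff_inj, rule ext)
  fix k :: "nat \<times> nat"
  obtain m n where k: "k = (m, n)"
    by (cases k)
  show "coeff (A1 (V2 x)) k = coeff (V2 (A1 x)) k"
    unfolding k coeff_A1 coeff_V2 by (cases n) (simp_all add: shift_w_def coeff_A1)
qed

lemma A1_A2_basis_vec_0: "A1 (basis_vec (0, 0)) = 0" "A2 (basis_vec (0, 0)) = 0"
proof -
  have "coeff 0 = (\<lambda>k. 0)"
    using coeff_scaleC[of 0 0] by simp
  then show "A1 (basis_vec (0, 0)) = 0" "A2 (basis_vec (0, 0)) = 0"
    by (auto intro!: coeff_inj ext simp: coeff_A1 coeff_A2 coeff_basis_vec kronecker_def)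
qed

lemma norm_basis_vec: "norm (basis_vec j) = 1"
proof -
  have "(norm (basis_vec j))\<^sup>2 = 1"
    using infsumI[OF has_sum_kronecker_sq] by (simp add: power2_norm_eq_coeff coeff_basis_vec)
  then show ?thesis
    using norm_ge_zero[of "basis_vec j"] by (auto simp: power2_eq_1_iff)
qed

lemma doubly_commuting_pair: "doubly_commuting_pair V1 V2 (basis_vec (0, 0))"
  by unfold_locales (simp_all add: A2_V1_commute A1_V2_commute A1_A2_basis_vec_0 norm_basis_vec)

end

theorem theorem7p1:
  fixes V1 V2 :: "'a::chilbert \<Rightarrow> 'a"
  assumes "separable_space TYPE('a)"
    and "isometric_pair V1 V2"
    and "irreducible_pair V1 V2"
  shows "one_finite_pair V1 V2 \<longleftrightarrow> unitarily_equiv_Mz_Mw V1 V2"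
proof
  interpret commuting_isometries V1 V2
    by unfold_locales (rule assms(2))
  assume "one_finite_pair V1 V2"
  then have "normal_op cross" "crank defect = 1"
    by (simp_all add: one_finite_pair_def compact_normal_pair_def)
  then obtain e where "norm e = 1" "A1 e = 0" "A2 e = 0"
    and "\<forall>x. A2 (V1 x) = V1 (A2 x)" "\<forall>x. A1 (V2 x) = V2 (A1 x)"
    using normal_rank_one_defect_imp_doubly_commuting by metis
  then interpret irreducible_doubly_commuting_pair V1 V2 e
    using assms(3) by unfold_locales simp_all
  show "unitarily_equiv_Mz_Mw V1 V2"
    by (rule unitarily_equiv)
next
  assume "unitarily_equiv_Mz_Mw V1 V2"
  then obtain U where "unitary_to_H2 U" "\<And>x. U (V1 x) = Mz (U x)" "\<And>x. U (V2 x) = Mw (U x)"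
    unfolding unitarily_equiv_Mz_Mw_def by blast
  then interpret H2_model V1 V2 U
    using assms(2) by unfold_locales simp_all
  interpret doubly_commuting_pair V1 V2 "basis_vec (0, 0)"
    by (rule doubly_commuting_pair)
  interpret irreducible_doubly_commuting_pair V1 V2 "basis_vec (0, 0)"
    by unfold_locales (rule assms(3))
  show "one_finite_pair V1 V2"
    by (rule one_finite)
qed

end
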